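(* Let $v$ satisfy the standing assumptions and the doubling condition with constant $D$, and let $u\in h^\infty_v$ with $|u(z)|\le Kv(|z|)$ be of the form $u(re^{i\phi})=\sum_{j\ge0}\alpha_j r^{n_j}\cos(n_j\phi)$, $\alpha_j\in\mathbb{R}$, where the $n_j$ are positive integers with $\lambda n_j<n_{j+1}\le 4n_j$ for all $j$, for some $\lambda\in(1,2]$. Put $c_j=\int_{1/2}^1\frac{r^{n_j}dv(r)}{v(r)^2}$, $S_N(\phi)=\sum_{j=0}^N\alpha_jc_j\cos(n_j\phi)$, $r_N=1-1/n_N$, and $$I_u(R,\phi)=\int_{1/2}^R\frac{u(re^{i\phi})\,dv(r)}{v(r)^2}.$$ Then there is a constant $C$ (independent of $N$, $R$, $\phi$) such that $|I_u(R,\phi)-S_N(\phi)|\le C$ for all $N$ with $n_N\ge2$, all $R\in[r_N,r_{N+1})$ and all $\phi\in(-\pi,\pi]$. Moreover $\sum_{j=0}^N(\alpha_jc_j)^2\le C\log g(n_N)$ for all $N$ with $n_N$ sufficiently large, where $g(x)=v(1-x^{-1})$.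
   Context: Standing assumptions: $v:[0,1)\to[1,\infty)$ is positive, increasing, continuous, $v(0)=1$, $\lim_{r\to1}v(r)=+\infty$. Doubling condition: $v(1-d)\le D\,v(1-2d)$ for all $d\in(0,1/2]$. $h^\infty_v$ is the set of real harmonic $u$ on $\mathbb{D}$ with $|u(z)|\le Kv(|z|)$ for some $K>0$. Integrals with respect to $dv$ are Riemann–Stieltjes integrals. *)

theory Defs
  imports "HOL-Analysis.Analysis"
begin

definition RS_sum :: "(real \<Rightarrow> real) \<Rightarrow> (real \<Rightarrow> real) \<Rightarrow> (nat \<Rightarrow> real) \<Rightarrow> (nat \<Rightarrow> real) \<Rightarrow> nat \<Rightarrow> real" where
  "RS_sum f g x t n = (\<Sum>i<n. f (t i) * (g (x (Suc i)) - g (x i)))"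

definition tagged_partition :: "real \<Rightarrow> real \<Rightarrow> (nat \<Rightarrow> real) \<Rightarrow> (nat \<Rightarrow> real) \<Rightarrow> nat \<Rightarrow> bool" where
  "tagged_partition a b x t n \<longleftrightarrow> x 0 = a \<and> x n = b \<and>
     (\<forall>i<n. x i < x (Suc i) \<and> x i \<le> t i \<and> t i \<le> x (Suc i))"

definition has_RS_integral :: "(real \<Rightarrow> real) \<Rightarrow> (real \<Rightarrow> real) \<Rightarrow> real \<Rightarrow> real \<Rightarrow> real \<Rightarrow> bool" where
  "has_RS_integral f g a b I \<longleftrightarrow>
     (\<forall>e>0. \<exists>d>0. \<forall>x t n. tagged_partition a b x t n \<and> (\<forall>i<n. x (Suc i) - x i < d)
        \<longrightarrow> \<bar>RS_sum f g x t n - I\<bar> < e)"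

definition RS_integral :: "(real \<Rightarrow> real) \<Rightarrow> (real \<Rightarrow> real) \<Rightarrow> real \<Rightarrow> real \<Rightarrow> real" where
  "RS_integral f g a b = (THE I. has_RS_integral f g a b I)"

definition RS_integral_to_1 :: "(real \<Rightarrow> real) \<Rightarrow> (real \<Rightarrow> real) \<Rightarrow> real \<Rightarrow> real" where
  "RS_integral_to_1 f g a = Lim (at_left 1) (\<lambda>R. RS_integral f g a R)"

definition weight :: "(real \<Rightarrow> real) \<Rightarrow> bool" where
  "weight v \<longleftrightarrow> (\<forall>r\<in>{0..<1}. v r \<ge> 1) \<and> strict_mono_on {0..<1} v \<and>
     continuous_on {0..<1} v \<and> v 0 = 1 \<and> filterlim v at_top (at_left 1)"

definition doubling :: "(real \<Rightarrow> real) \<Rightarrow> real \<Rightarrow> bool" where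
  "doubling v D \<longleftrightarrow> (\<forall>d\<in>{0<..1/2}. v (1 - d) \<le> D * v (1 - 2 * d))"

end

theory Submission
  imports Defs
begin

(* (1) Riemann-Stieltjes integrals with respect to v are Henstock-Kurzweil integrals after the
       substitution s = v(r); this turns every RS integral into an ordinary integral over [v a, v b].
   (2) Fourier analysis on circles |z| = r gives |alpha_k| r^{n_k} <= 2 K v(r) and Bessel's
       inequality sum_j (alpha_j r^{n_j})^2 <= 2 (K v(r))^2.
   (3) Iterating the doubling condition gives v(1 - d) <= D (e/d)^q v(1 - e) for d <= e <= 1/2.
       With (2) this yields |alpha_j| <= A g(n_j), a tail estimate
       |u - P_N| <= C v(r)^2 / v(R) for r <= R < r_{N+1} (P_N the N-th partial sum) and
       |P_N| <= C g(n_N) for r >= r_N, as well as 0 <= c_j <= C / g(n_j).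
   (4) The first claim follows by splitting I_u(R) - S_N = int_{1/2}^R (u - P_N) dv/v^2
       - int_R^1 P_N dv/v^2; the second from Bessel's inequality and Abel summation
       sum_j alpha_j^2 / g(n_j)^2 <= C (1 + log g(n_N)). *)

text \<open>Uniqueness of the Riemann--Stieltjes integral: fine tagged partitions always exist.\<close>

lemma tagged_partition_exists:
  fixes a b d :: real
  assumes "a \<le> b" "d > 0"
  shows "\<exists>x t n. tagged_partition a b x t n \<and> (\<forall>i<n. x (Suc i) - x i < d)"
proof (cases "a = b")
  case True
  then show ?thesis
    by (intro exI[of _ "\<lambda>_. a"] exI[of _ 0]) (simp add: tagged_partition_def)
next
  case False
  then have ab: "a < b" using assms by simp
  obtain n :: nat where n: "(b - a) / d < n" using reals_Archimedean2 by blast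
  have npos: "n > 0" using n ab assms
    by (metis divide_pos_pos gr0I less_eq_real_def of_nat_0 order_less_asym' diff_gt_0_iff_gt)
  define x where "x = (\<lambda>i::nat. a + real i * (b - a) / real n)"
  have step: "x (Suc i) - x i = (b - a) / n" for i
    by (simp add: x_def algebra_simps add_divide_distrib[symmetric] diff_divide_distrib[symmetric])
  have small: "(b - a) / n < d"
    using n assms npos by (simp add: divide_less_eq mult.commute pos_divide_less_eq)
  have "(b - a) / n > 0" using ab npos by simp
  then have lt: "x i < x (Suc i)" for i using step[of i] by linarith
  have "x 0 = a" "x n = b" using npos by (auto simp: x_def)
  then have "tagged_partition a b x x n"
    unfolding tagged_partition_def using lt less_imp_le by blast
  then show ?thesis using step small by (intro exI[of _ x] exI[of _ n]) auto
qed

lemma has_RS_integral_unique: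
  assumes "a \<le> b" "has_RS_integral f g a b I" "has_RS_integral f g a b J"
  shows "I = J"
proof (rule ccontr)
  assume ne: "I \<noteq> J"
  define e where "e = \<bar>I - J\<bar> / 2"
  have e: "e > 0" using ne by (simp add: e_def)
  obtain d1 where d1: "d1 > 0" "\<And>x t n. tagged_partition a b x t n \<and> (\<forall>i<n. x (Suc i) - x i < d1)
        \<Longrightarrow> \<bar>RS_sum f g x t n - I\<bar> < e"
    using assms(2) e unfolding has_RS_integral_def by blast
  obtain d2 where d2: "d2 > 0" "\<And>x t n. tagged_partition a b x t n \<and> (\<forall>i<n. x (Suc i) - x i < d2)
        \<Longrightarrow> \<bar>RS_sum f g x t n - J\<bar> < e"
    using assms(3) e unfolding has_RS_integral_def by blast
  obtain x t n where p: "tagged_partition a b x t n" "\<forall>i<n. x (Suc i) - x i < min d1 d2"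
    using tagged_partition_exists[OF assms(1), of "min d1 d2"] d1 d2 by auto
  have "\<bar>RS_sum f g x t n - I\<bar> < e" "\<bar>RS_sum f g x t n - J\<bar> < e"
    using d1(2) d2(2) p by auto
  moreover have "\<bar>I - J\<bar> \<le> \<bar>RS_sum f g x t n - I\<bar> + \<bar>RS_sum f g x t n - J\<bar>" by linarith
  ultimately have "\<bar>I - J\<bar> < 2 * e" by linarith
  then show False by (simp add: e_def)
qed

lemma RS_integral_eqI:
  assumes "a \<le> b" "has_RS_integral f g a b I"
  shows "RS_integral f g a b = I"
  unfolding RS_integral_def using has_RS_integral_unique[OF assms(1)] assms(2)
  by (intro the_equality) auto

lemma tagged_partition_mono:
  assumes "tagged_partition a b x t n" "i \<le> j" "j \<le> n"
  shows "x i \<le> x j"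
  using assms(2,3)
proof (induction j)
  case 0 then show ?case by simp
next
  case (Suc j)
  show ?case
  proof (cases "i = Suc j")
    case False
    then have "x i \<le> x j" using Suc by simp
    moreover have "x j < x (Suc j)" using assms(1) Suc.prems unfolding tagged_partition_def by auto
    ultimately show ?thesis by simp
  qed simp
qed

lemma tagged_partition_range:
  assumes "tagged_partition a b x t n" "i \<le> n"
  shows "a \<le> x i" "x i \<le> b"
  using tagged_partition_mono[OF assms(1), of 0 i] tagged_partition_mono[OF assms(1), of i n] assms
  unfolding tagged_partition_def by auto

locale weight_function =
  fixes v :: "real \<Rightarrow> real"
  assumes weight: "weight v"
begin

lemma v_ge1: "0 \<le> r \<Longrightarrow> r < 1 \<Longrightarrow> 1 \<le> v r"
  using weight unfolding weight_def by auto

lemma v_pos: "0 \<le> r \<Longrightarrow> r < 1 \<Longrightarrow> 0 < v r"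
  using v_ge1[of r] by simp

lemma v_less: "0 \<le> x \<Longrightarrow> x < y \<Longrightarrow> y < 1 \<Longrightarrow> v x < v y"
  using weight unfolding weight_def strict_mono_on_def by auto

lemma v_le: "0 \<le> x \<Longrightarrow> x \<le> y \<Longrightarrow> y < 1 \<Longrightarrow> v x \<le> v y"
  using v_less[of x y] by (cases "x = y") auto

lemma v_zero: "v 0 = 1"
  using weight unfolding weight_def by auto

lemma v_tendsto_infinity: "filterlim v at_top (at_left 1)"
  using weight unfolding weight_def by auto

lemma v_continuous: "0 \<le> a \<Longrightarrow> b < 1 \<Longrightarrow> continuous_on {a..b} v"
  using weight unfolding weight_def by (auto elim: continuous_on_subset)

text \<open>The inverse of v; the substitution s = v r turns integrals d v into ordinary integrals.\<close>

definition v_inv :: "real \<Rightarrow> real" where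
  "v_inv = the_inv_into {0..<1} v"

lemma v_inv_v: "0 \<le> x \<Longrightarrow> x < 1 \<Longrightarrow> v_inv (v x) = x"
proof -
  have "inj_on v {0..<1}"
    unfolding inj_on_def by (metis atLeastLessThan_iff less_irrefl linorder_neqE_linordered_idom v_less)
  then show "0 \<le> x \<Longrightarrow> x < 1 \<Longrightarrow> v_inv (v x) = x"
    unfolding v_inv_def by (simp add: the_inv_into_f_f)
qed

lemma v_image_interval:
  assumes "0 \<le> a" "a \<le> b" "b < 1"
  shows "v ` {a..b} = {v a..v b}"
proof
  show "v ` {a..b} \<subseteq> {v a..v b}" using assms v_le by auto
  show "{v a..v b} \<subseteq> v ` {a..b}"
  proof
    fix y assume "y \<in> {v a..v b}"
    then obtain x where "a \<le> x" "x \<le> b" "v x = y"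
      using IVT'[of v a y b] v_continuous assms by auto
    then show "y \<in> v ` {a..b}" by auto
  qed
qed

lemma v_inv_in_interval:
  assumes "0 \<le> a" "a \<le> b" "b < 1" "s \<in> {v a..v b}"
  shows "v_inv s \<in> {a..b}" "v (v_inv s) = s"
proof -
  have "s \<in> v ` {a..b}" using v_image_interval[OF assms(1-3)] assms(4) by simp
  then obtain x where x: "x \<in> {a..b}" "s = v x" by auto
  then have "v_inv s = x" using v_inv_v assms by auto
  then show "v_inv s \<in> {a..b}" "v (v_inv s) = s" using x by auto
qed

lemma continuous_on_compose_v_inv:
  assumes "0 \<le> a" "a \<le> b" "b < 1" "continuous_on {a..b} f"
  shows "continuous_on {v a..v b} (\<lambda>s. f (v_inv s))"
proof -
  have "continuous_on (v ` {a..b}) v_inv"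
    by (rule continuous_on_inv) (use v_continuous assms v_inv_v in auto)
  then have "continuous_on {v a..v b} v_inv" using v_image_interval[OF assms(1-3)] by simp
  then show ?thesis
    by (rule continuous_on_compose2[OF assms(4)]) (use v_inv_in_interval[OF assms(1-3)] in auto)
qed

lemma continuous_on_power_div_v_sq:
  assumes "0 \<le> a" "b < 1"
  shows "continuous_on {a..b} (\<lambda>r. r ^ m / (v r)\<^sup>2)"
proof -
  have "v r \<noteq> 0" if "r \<in> {a..b}" for r using that v_pos[of r] assms by auto
  then show ?thesis using v_continuous[OF assms] by (intro continuous_intros) auto
qed

lemma RS_cell_estimate:
  assumes xy: "0 \<le> x" "x \<le> y" "y < 1" and f: "continuous_on {x..y} f"
    and osc: "\<And>r. r \<in> {x..y} \<Longrightarrow> \<bar>f r - c\<bar> \<le> e"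
  shows "\<bar>c * (v y - v x) - integral {v x..v y} (\<lambda>s. f (v_inv s))\<bar> \<le> e * (v y - v x)"
proof -
  have le: "v x \<le> v y" using xy by (intro v_le) auto
  have int: "(\<lambda>s. f (v_inv s)) integrable_on {v x..v y}"
    by (rule integrable_continuous_real[OF continuous_on_compose_v_inv[OF xy f]])
  have "\<bar>c * (v y - v x) - integral {v x..v y} (\<lambda>s. f (v_inv s))\<bar>
      = norm (integral {v x..v y} (\<lambda>s. c - f (v_inv s)))"
    using int le by (subst integral_diff) (auto simp: mult.commute)
  also have "\<dots> \<le> integral {v x..v y} (\<lambda>s. e)"
  proof (rule integral_norm_bound_integral)
    show "(\<lambda>s. c - f (v_inv s)) integrable_on {v x..v y}" using int by (intro integrable_diff) auto
    fix s assume "s \<in> {v x..v y}"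
    then have "v_inv s \<in> {x..y}" using v_inv_in_interval(1)[OF xy] by blast
    then show "norm (c - f (v_inv s)) \<le> e" using osc by (simp add: abs_minus_commute)
  qed (rule integrable_const_ivl)
  also have "\<dots> = e * (v y - v x)" using le by simp
  finally show ?thesis .
qed

lemma integral_over_partition:
  fixes h :: "real \<Rightarrow> real"
  assumes h: "h integrable_on {v a..v b}" and p: "tagged_partition a b x t n"
    and ab: "0 \<le> a" "b < 1" and k: "k \<le> n"
  shows "integral {v a..v (x k)} h = (\<Sum>i<k. integral {v (x i)..v (x (Suc i))} h)"
  using k
proof (induction k)
  case 0
  then show ?case using p unfolding tagged_partition_def by simp
next
  case (Suc k)
  have r: "a \<le> x k" "x k \<le> x (Suc k)" "x (Suc k) \<le> b"
    using tagged_partition_range[OF p] tagged_partition_mono[OF p, of k "Suc k"] Suc.prems by auto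
  have le: "v a \<le> v (x k)" "v (x k) \<le> v (x (Suc k))" "v (x (Suc k)) \<le> v b"
    using r ab by (auto intro!: v_le)
  have "h integrable_on {v a..v (x (Suc k))}"
    by (rule integrable_subinterval_real[OF h]) (use le in auto)
  from Henstock_Kurzweil_Integration.integral_combine[OF le(1,2) this]
  have "integral {v a..v (x (Suc k))} h
      = integral {v a..v (x k)} h + integral {v (x k)..v (x (Suc k))} h" by simp
  then show ?case using Suc by simp
qed

lemma RS_sum_error:
  assumes ab: "0 \<le> a" "b < 1" and f: "continuous_on {a..b} f" and p: "tagged_partition a b x t n"
    and osc: "\<And>i y. i < n \<Longrightarrow> y \<in> {x i..x (Suc i)} \<Longrightarrow> \<bar>f y - f (t i)\<bar> \<le> e"
  shows "\<bar>RS_sum f v x t n - integral {v a..v b} (\<lambda>s. f (v_inv s))\<bar> \<le> e * (v b - v a)"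
proof -
  define h where "h = (\<lambda>s. f (v_inv s))"
  have a_le_b: "a \<le> b" using tagged_partition_range[OF p, of 0] p by (simp add: tagged_partition_def)
  have hi: "h integrable_on {v a..v b}"
    unfolding h_def by (rule integrable_continuous_real[OF continuous_on_compose_v_inv[OF ab(1) a_le_b ab(2) f]])
  have split: "integral {v a..v b} h = (\<Sum>i<n. integral {v (x i)..v (x (Suc i))} h)"
    using integral_over_partition[OF hi p ab order_refl] p by (simp add: tagged_partition_def)
  have cell: "\<bar>f (t i) * (v (x (Suc i)) - v (x i)) - integral {v (x i)..v (x (Suc i))} h\<bar>
      \<le> e * (v (x (Suc i)) - v (x i))" if i: "i < n" for i
  proof -
    have r: "a \<le> x i" "x (Suc i) \<le> b" "x i \<le> x (Suc i)"
      using tagged_partition_range[OF p, of i] tagged_partition_range[OF p, of "Suc i"] i p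
      unfolding tagged_partition_def by auto
    show ?thesis unfolding h_def
      by (rule RS_cell_estimate) (use r ab osc[OF i] in \<open>auto intro: continuous_on_subset[OF f]\<close>)
  qed
  have "\<bar>RS_sum f v x t n - integral {v a..v b} h\<bar>
      \<le> (\<Sum>i<n. \<bar>f (t i) * (v (x (Suc i)) - v (x i)) - integral {v (x i)..v (x (Suc i))} h\<bar>)"
    unfolding RS_sum_def split sum_subtractf[symmetric] by (rule sum_abs)
  also have "\<dots> \<le> (\<Sum>i<n. e * (v (x (Suc i)) - v (x i)))"
    by (rule sum_mono) (use cell in auto)
  also have "\<dots> = e * (v b - v a)"
    using sum_lessThan_telescope[of "\<lambda>i. v (x i)" n] p
    by (simp add: sum_distrib_left[symmetric] tagged_partition_def)
  finally show ?thesis unfolding h_def .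
qed

text \<open>Uniform continuity of f controls the oscillation
  on fine partitions.\<close>

lemma has_RS_integral_change_var:
  assumes ab: "0 \<le> a" "a \<le> b" "b < 1" and f: "continuous_on {a..b} f"
  shows "has_RS_integral f v a b (integral {v a..v b} (\<lambda>s. f (v_inv s)))"
  unfolding has_RS_integral_def
proof (intro allI impI)
  fix e :: real assume e: "e > 0"
  have vab: "v a \<le> v b" using ab v_le by auto
  define e' where "e' = e / (v b - v a + 1)"
  have e': "e' > 0" "e' * (v b - v a) < e" using e vab by (simp_all add: e'_def field_simps)
  have "uniformly_continuous_on {a..b} f" by (rule compact_uniformly_continuous[OF f compact_Icc])
  then obtain d where d: "d > 0"
    "\<And>x y. x \<in> {a..b} \<Longrightarrow> y \<in> {a..b} \<Longrightarrow> dist y x < d \<Longrightarrow> dist (f y) (f x) < e'"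
    using e' unfolding uniformly_continuous_on_def by metis
  show "\<exists>d>0. \<forall>x t n. tagged_partition a b x t n \<and> (\<forall>i<n. x (Suc i) - x i < d) \<longrightarrow>
            \<bar>RS_sum f v x t n - integral {v a..v b} (\<lambda>s. f (v_inv s))\<bar> < e"
  proof (intro exI[of _ d] conjI allI impI)
    fix x t n assume "tagged_partition a b x t n \<and> (\<forall>i<n. x (Suc i) - x i < d)"
    then have p: "tagged_partition a b x t n" and mesh: "\<And>i. i < n \<Longrightarrow> x (Suc i) - x i < d"
      by auto
    have "\<bar>RS_sum f v x t n - integral {v a..v b} (\<lambda>s. f (v_inv s))\<bar> \<le> e' * (v b - v a)"
    proof (rule RS_sum_error[OF ab(1,3) f p])
      fix i y assume i: "i < n" and y: "y \<in> {x i..x (Suc i)}"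
      have r: "a \<le> x i" "x (Suc i) \<le> b" "x i \<le> t i" "t i \<le> x (Suc i)"
        using tagged_partition_range[OF p, of i] tagged_partition_range[OF p, of "Suc i"] i p
        unfolding tagged_partition_def by auto
      have "dist y (t i) < d" using y r mesh[OF i] by (auto simp: dist_real_def)
      then show "\<bar>f y - f (t i)\<bar> \<le> e'"
        using d(2)[of "t i" y] y r by (auto simp: dist_real_def)
    qed
    then show "\<bar>RS_sum f v x t n - integral {v a..v b} (\<lambda>s. f (v_inv s))\<bar> < e" using e' by linarith
  qed (rule d(1))
qed

lemma RS_integral_change_var:
  assumes "0 \<le> a" "a \<le> b" "b < 1" "continuous_on {a..b} f"
  shows "RS_integral f v a b = integral {v a..v b} (\<lambda>s. f (v_inv s))"
  using RS_integral_eqI[OF assms(2) has_RS_integral_change_var[OF assms]] .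

end

lemma integral_cos_cos:
  fixes m k :: nat
  shows "integral {-pi..pi} (\<lambda>x. cos (real m * x) * cos (real k * x)) =
     (if m = k then (if m = 0 then 2 * pi else pi) else 0)"
proof -
  have eq: "(\<lambda>x. cos (real m * x) * cos (real k * x)) =
      (\<lambda>x. cos (real_of_int (int m - int k) * x) / 2 + cos (real_of_int (int m + int k) * x) / 2)"
    by (rule ext) (simp add: cos_times_cos left_diff_distrib distrib_right add_divide_distrib)
  have "((\<lambda>x. cos (real m * x) * cos (real k * x)) has_integral
     ((if int m - int k = 0 then 2 * pi else 0) / 2 + (if int m + int k = 0 then 2 * pi else 0) / 2))
     {-pi..pi}"
    unfolding eq by (intro has_integral_add has_integral_divide has_integral_cos_nx)
  then show ?thesis by (auto dest!: integral_unique)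
qed

lemma integrable_continuous_Icc_pi:
  fixes f :: "real \<Rightarrow> real"
  shows "continuous_on UNIV f \<Longrightarrow> f integrable_on {-pi..pi}"
  by (rule integrable_continuous_real) (erule continuous_on_subset, simp)

lemma integral_cos_sum_square:
  fixes a :: "nat \<Rightarrow> real" and m :: "nat \<Rightarrow> nat"
  assumes inj: "inj m" and pos: "\<And>j. 0 < m j"
  shows "integral {-pi..pi} (\<lambda>x. (\<Sum>j<M. a j * cos (real (m j) * x))\<^sup>2) = pi * (\<Sum>j<M. (a j)\<^sup>2)"
proof -
  define c where "c = (\<lambda>j x. cos (real (m j) * x))"
  have orth: "integral {-pi..pi} (\<lambda>x. c i x * c j x) = (if i = j then pi else 0)" for i j
  proof -
    have "m i \<noteq> 0" using pos[of i] by simp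
    moreover have "(m i = m j) = (i = j)" using inj by (simp add: inj_eq)
    ultimately show ?thesis unfolding c_def by (auto simp: integral_cos_cos simp del: of_nat_eq_iff)
  qed
  have int: "(\<lambda>x. a i * a j * (c i x * c j x)) integrable_on {-pi..pi}" for i j
    unfolding c_def by (intro integrable_continuous_Icc_pi continuous_intros)
  have "integral {-pi..pi} (\<lambda>x. (\<Sum>j<M. a j * c j x)\<^sup>2)
      = integral {-pi..pi} (\<lambda>x. \<Sum>i<M. \<Sum>j<M. a i * a j * (c i x * c j x))"
    unfolding power2_eq_square sum_product by (simp add: algebra_simps)
  also have "\<dots> = (\<Sum>i<M. integral {-pi..pi} (\<lambda>x. \<Sum>j<M. a i * a j * (c i x * c j x)))"
    by (rule integral_sum) (simp_all add: int integrable_sum)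
  also have "\<dots> = (\<Sum>i<M. \<Sum>j<M. integral {-pi..pi} (\<lambda>x. a i * a j * (c i x * c j x)))"
    by (intro sum.cong refl integral_sum) (simp_all add: int)
  also have "\<dots> = (\<Sum>i<M. \<Sum>j<M. a i * a j * (if i = j then pi else 0))"
    by (simp add: orth)
  also have "\<dots> = pi * (\<Sum>j<M. (a j)\<^sup>2)"
    by (simp add: if_distrib sum.delta sum_distrib_left power2_eq_square algebra_simps cong: if_cong)
  finally show ?thesis unfolding c_def .
qed

lemma half_le_power: "1 \<le> m \<Longrightarrow> 1/2 \<le> (1 - 1 / (2 * real m)) ^ m"
  using Bernoulli_inequality[of "- 1 / (2 * real m)" m] by (simp add: field_simps)

lemma power_le_exp:
  fixes r :: real assumes "0 \<le> r" "r \<le> 1"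
  shows "r ^ m \<le> exp (- (real m * (1 - r)))"
proof -
  have "r \<le> exp (r - 1)" using exp_ge_add_one_self[of "r - 1"] by simp
  then have "r ^ m \<le> exp (r - 1) ^ m" by (rule power_mono) (use assms in simp)
  also have "\<dots> = exp (real m * (r - 1))" by (simp add: exp_of_nat_mult)
  finally show ?thesis by (simp add: algebra_simps)
qed

lemma power_mult_exp_le_fact:
  fixes x :: real assumes "0 \<le> x"
  shows "x ^ k * exp (- x) \<le> fact k"
proof -
  have "(\<Sum>i\<in>{k}. x ^ i /\<^sub>R fact i) \<le> (\<Sum>i. x ^ i /\<^sub>R fact i)"
    by (rule sum_le_suminf) (use assms summable_norm_exp[of x] in \<open>auto simp: abs_of_nonneg\<close>)
  then have "x ^ k / fact k \<le> exp x" by (simp add: exp_def divide_inverse_commute)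
  then show ?thesis by (simp add: exp_minus field_simps)
qed

lemma power_diff_le:
  fixes r s :: real assumes "0 \<le> s" "s \<le> r" "r \<le> 1"
  shows "r ^ m - s ^ m \<le> real m * (r - s)"
proof (induction m)
  case (Suc m)
  have "r ^ Suc m - s ^ Suc m = r * (r ^ m - s ^ m) + s ^ m * (r - s)"
    by (simp add: algebra_simps)
  also have "\<dots> \<le> 1 * (r ^ m - s ^ m) + 1 * (r - s)"
  proof (rule add_mono)
    have "0 \<le> r ^ m - s ^ m" using assms by (simp add: power_mono)
    then show "r * (r ^ m - s ^ m) \<le> 1 * (r ^ m - s ^ m)" using assms by (intro mult_right_mono) auto
    have "s ^ m \<le> 1" using assms by (simp add: power_le_one)
    then show "s ^ m * (r - s) \<le> 1 * (r - s)" using assms by (intro mult_right_mono) auto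
  qed
  finally show ?case using Suc by (simp add: algebra_simps)
qed simp

lemma has_integral_inverse_square:
  fixes a b :: real assumes "0 < a" "a \<le> b"
  shows "((\<lambda>s. 1 / s\<^sup>2) has_integral (1/a - 1/b)) {a..b}"
proof -
  have "((\<lambda>s. 1 / s\<^sup>2) has_integral ((- 1 / b) - (- 1 / a))) {a..b}"
  proof (rule fundamental_theorem_of_calculus[OF assms(2)])
    fix s assume s: "s \<in> {a..b}"
    then have "s \<noteq> 0" using assms by auto
    then show "((\<lambda>s. - 1 / s) has_vector_derivative 1 / s\<^sup>2) (at s within {a..b})"
      unfolding has_real_derivative_iff_has_vector_derivative[symmetric]
      by (auto intro!: derivative_eq_intros simp: power2_eq_square)
  qed
  then show ?thesis by simp
qed

lemma integral_le_inverse: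
  fixes h :: "real \<Rightarrow> real"
  assumes "0 < a" "a \<le> b" "h integrable_on {a..b}" "\<And>s. s \<in> {a..b} \<Longrightarrow> h s \<le> 1 / s\<^sup>2"
  shows "integral {a..b} h \<le> 1 / a"
proof -
  have "integral {a..b} h \<le> integral {a..b} (\<lambda>s. 1 / s\<^sup>2)"
    by (rule integral_le[OF assms(3)]) (use has_integral_inverse_square[OF assms(1,2)] assms(4) in auto)
  also have "\<dots> = 1/a - 1/b" using has_integral_inverse_square[OF assms(1,2)] by (rule integral_unique)
  also have "\<dots> \<le> 1/a" using assms by simp
  finally show ?thesis .
qed

lemma integral_le_const:
  fixes h :: "real \<Rightarrow> real"
  assumes "a \<le> b" "h integrable_on {a..b}" "\<And>s. s \<in> {a..b} \<Longrightarrow> h s \<le> C"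
  shows "integral {a..b} h \<le> C * (b - a)"
proof -
  have "integral {a..b} h \<le> integral {a..b} (\<lambda>s. C)"
    by (rule integral_le[OF assms(2)]) (use assms(3) in auto)
  then show ?thesis using assms(1) by (simp add: mult.commute)
qed

lemma increasing_bounded_tendsto_at_left_1:
  fixes g :: "real \<Rightarrow> real"
  assumes a: "a < 1" and mono: "\<And>x y. a \<le> x \<Longrightarrow> x \<le> y \<Longrightarrow> y < 1 \<Longrightarrow> g x \<le> g y"
    and bd: "\<And>x. a \<le> x \<Longrightarrow> x < 1 \<Longrightarrow> g x \<le> B"
  shows "(g \<longlongrightarrow> Sup (g ` {a..<1})) (at_left 1)"
proof (rule increasing_tendsto)
  have bdd: "bdd_above (g ` {a..<1})" using bd by (auto intro!: bdd_aboveI)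
  have ne: "g ` {a..<1} \<noteq> {}" using a by auto
  have ev: "eventually (\<lambda>x. a < x \<and> x < 1) (at_left (1::real))"
    using a by (auto simp: eventually_at_left intro!: exI[of _ a])
  show "eventually (\<lambda>x. g x \<le> Sup (g ` {a..<1})) (at_left 1)"
    using ev by eventually_elim (auto intro!: cSup_upper bdd)
  fix y assume y: "y < Sup (g ` {a..<1})"
  then obtain x0 where x0: "x0 \<in> {a..<1}" "y < g x0" using less_cSup_iff[OF ne bdd] by auto
  have "eventually (\<lambda>x. x0 < x \<and> x < 1) (at_left (1::real))"
    using x0 by (auto simp: eventually_at_left intro!: exI[of _ x0])
  then show "eventually (\<lambda>x. y < g x) (at_left 1)"
    by eventually_elim (use x0 mono in \<open>smt (verit) atLeastLessThan_iff\<close>)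
qed

lemma one_minus_square_ratio_le_ln:
  fixes x y :: real
  assumes "0 < x" "x \<le> y"
  shows "1 - x\<^sup>2 / y\<^sup>2 \<le> 2 * (ln y - ln x)"
proof -
  have "ln (x\<^sup>2 / y\<^sup>2) \<le> x\<^sup>2 / y\<^sup>2 - 1" by (rule ln_le_minus_one) (use assms in simp)
  moreover have "ln (x\<^sup>2 / y\<^sup>2) = 2 * ln x - 2 * ln y"
    using assms by (simp add: ln_div ln_realpow)
  ultimately show ?thesis by simp
qed

lemma abel_summation_log_bound:
  fixes a W :: "nat \<Rightarrow> real"
  assumes a: "\<And>j. 0 \<le> a j" and W1: "\<And>j. 1 \<le> W j" and Wm: "\<And>j. W j \<le> W (Suc j)"
    and S: "\<And>M. (\<Sum>j\<le>M. a j) \<le> B * (W M)\<^sup>2"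
  shows "(\<Sum>j\<le>N. a j / (W j)\<^sup>2) \<le> (\<Sum>j\<le>N. a j) / (W N)\<^sup>2 + 2 * B * (ln (W N) - ln (W 0))"
proof (induction N)
  case (Suc N)
  define AN where "AN = (\<Sum>j\<le>N. a j)"
  have Wp: "0 < W N" "0 < W (Suc N)" using W1[of N] W1[of "Suc N"] by auto
  have "0 \<le> B * (W 0)\<^sup>2" using S[of 0] a[of 0] by simp
  then have B0: "0 \<le> B" using W1[of 0] by (simp add: zero_le_mult_iff)
  have step: "AN * (1 / (W N)\<^sup>2 - 1 / (W (Suc N))\<^sup>2) \<le> 2 * B * (ln (W (Suc N)) - ln (W N))"
  proof -
    have d0: "0 \<le> 1 / (W N)\<^sup>2 - 1 / (W (Suc N))\<^sup>2"
      using Wp Wm[of N] by (simp add: frac_le power_mono)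
    have "AN * (1 / (W N)\<^sup>2 - 1 / (W (Suc N))\<^sup>2) \<le> B * (W N)\<^sup>2 * (1 / (W N)\<^sup>2 - 1 / (W (Suc N))\<^sup>2)"
      using S[of N] d0 unfolding AN_def by (rule mult_right_mono)
    also have "\<dots> = B * (1 - (W N)\<^sup>2 / (W (Suc N))\<^sup>2)" using Wp by (simp add: field_simps)
    also have "\<dots> \<le> B * (2 * (ln (W (Suc N)) - ln (W N)))"
      using one_minus_square_ratio_le_ln[OF Wp(1) Wm[of N]] B0 by (intro mult_left_mono) auto
    finally show ?thesis by (simp add: algebra_simps)
  qed
  have "(\<Sum>j\<le>Suc N. a j / (W j)\<^sup>2)
      \<le> AN / (W N)\<^sup>2 + 2 * B * (ln (W N) - ln (W 0)) + a (Suc N) / (W (Suc N))\<^sup>2"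
    using Suc unfolding AN_def by simp
  also have "\<dots> = (AN + a (Suc N)) / (W (Suc N))\<^sup>2 + AN * (1 / (W N)\<^sup>2 - 1 / (W (Suc N))\<^sup>2)
       + 2 * B * (ln (W N) - ln (W 0))"
    by (simp add: field_simps add_divide_distrib)
  also have "\<dots> \<le> (\<Sum>j\<le>Suc N. a j) / (W (Suc N))\<^sup>2 + 2 * B * (ln (W (Suc N)) - ln (W 0))"
    using step unfolding AN_def by (simp add: algebra_simps)
  finally show ?case .
qed simp

locale cosine_series = weight_function v for v +
  fixes u :: "complex \<Rightarrow> real" and \<alpha> :: "nat \<Rightarrow> real" and n :: "nat \<Rightarrow> nat" and K :: real
  assumes K_pos: "K > 0"
    and u_bound: "\<forall>z. norm z < 1 \<longrightarrow> \<bar>u z\<bar> \<le> K * v (norm z)"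
    and u_sums: "\<forall>r \<phi>. 0 \<le> r \<and> r < 1 \<longrightarrow>
           (\<lambda>j. \<alpha> j * r ^ n j * cos (real (n j) * \<phi>)) sums u (complex_of_real r * cis \<phi>)"
    and n_pos: "\<forall>j. n j > 0"
    and n_less_Suc: "\<forall>j. n j < n (Suc j)"
begin

lemma n_strict_mono: "strict_mono n"
  using n_less_Suc by (simp add: strict_mono_Suc_iff)

lemma n_inj: "inj n"
  using n_strict_mono strict_mono_imp_inj_on by blast

lemma n_mono: "i \<le> j \<Longrightarrow> n i \<le> n j"
  using n_strict_mono by (simp add: strict_mono_less_eq)

lemma n_ge1: "1 \<le> real (n j)"
  using n_pos by (simp add: Suc_le_eq)

lemma u_circle_bound: "0 \<le> r \<Longrightarrow> r < 1 \<Longrightarrow> \<bar>u (complex_of_real r * cis \<phi>)\<bar> \<le> K * v r"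
  using u_bound by (metis abs_of_nonneg norm_cis norm_mult norm_of_real mult.right_neutral)

lemma u_circle_eq: "0 \<le> r \<Longrightarrow> r < 1 \<Longrightarrow>
    u (complex_of_real r * cis \<phi>) = (\<Sum>j. \<alpha> j * r ^ n j * cos (real (n j) * \<phi>))"
  using u_sums by (metis sums_unique)

text \<open>Inside the disc the series converges absolutely: its terms at a larger radius tend to 0,
  so the terms at radius r are dominated by a geometric series.\<close>

lemma summable_abs_coeffs:
  assumes r: "0 \<le> r" "r < 1"
  shows "summable (\<lambda>j. \<bar>\<alpha> j\<bar> * r ^ n j)"
proof -
  define \<rho> where "\<rho> = (1 + r) / 2"
  have \<rho>: "0 < \<rho>" "\<rho> < 1" "r < \<rho>" using r by (auto simp: \<rho>_def)
  have "(\<lambda>j. \<alpha> j * \<rho> ^ n j) \<longlonglongrightarrow> 0"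
    using u_sums[rule_format, of \<rho> 0] \<rho> by (auto dest!: sums_summable summable_LIMSEQ_zero)
  then have "Bseq (\<lambda>j. \<alpha> j * \<rho> ^ n j)" by (rule convergent_imp_Bseq[OF convergentI])
  then obtain M where M: "M > 0" "\<And>j. norm (\<alpha> j * \<rho> ^ n j) \<le> M" unfolding Bseq_def by auto
  define q where "q = r / \<rho>"
  have q: "0 \<le> q" "q < 1" using \<rho> r by (auto simp: q_def)
  have "norm (\<bar>\<alpha> j\<bar> * r ^ n j) \<le> M * q ^ j" for j
  proof -
    have "\<bar>\<alpha> j\<bar> * r ^ n j = (\<bar>\<alpha> j\<bar> * \<rho> ^ n j) * q ^ n j"
      using \<rho> by (simp add: q_def power_divide)
    also have "\<dots> \<le> M * q ^ n j"
      using M(2)[of j] \<rho> q by (intro mult_right_mono) (simp_all add: abs_mult)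
    also have "\<dots> \<le> M * q ^ j"
      using M(1) q strict_mono_imp_increasing[OF n_strict_mono, of j]
      by (intro mult_left_mono power_decreasing) auto
    finally show ?thesis using r by (simp add: abs_mult)
  qed
  moreover have "summable (\<lambda>j. M * q ^ j)" using q by (intro summable_mult summable_geometric) auto
  ultimately show ?thesis by (rule summable_comparison_test'[rotated])
qed

lemma u_circle_uniform_limit:
  assumes r: "0 \<le> r" "r < 1" and c: "\<And>\<phi>. \<bar>c \<phi>\<bar> \<le> 1"
  shows "uniform_limit UNIV (\<lambda>N \<phi>. \<Sum>j<N. \<alpha> j * r ^ n j * cos (real (n j) * \<phi>) * c \<phi>)
            (\<lambda>\<phi>. u (complex_of_real r * cis \<phi>) * c \<phi>) sequentially"
proof -
  have "uniform_limit UNIV (\<lambda>N \<phi>. \<Sum>j<N. \<alpha> j * r ^ n j * cos (real (n j) * \<phi>) * c \<phi>)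
            (\<lambda>\<phi>. \<Sum>j. \<alpha> j * r ^ n j * cos (real (n j) * \<phi>) * c \<phi>) sequentially"
  proof (rule Weierstrass_m_test[OF _ summable_abs_coeffs[OF r]])
    fix j \<phi>
    have "\<bar>cos (real (n j) * \<phi>) * c \<phi>\<bar> \<le> 1"
      using c[of \<phi>] by (simp add: abs_mult mult_le_one)
    then have "r ^ n j * (\<bar>cos (real (n j) * \<phi>)\<bar> * \<bar>c \<phi>\<bar>) \<le> r ^ n j"
      using r by (simp add: abs_mult mult_left_le)
    then show "norm (\<alpha> j * r ^ n j * cos (real (n j) * \<phi>) * c \<phi>) \<le> \<bar>\<alpha> j\<bar> * r ^ n j"
      using r mult_left_mono[of _ _ "\<bar>\<alpha> j\<bar>"] by (simp add: abs_mult mult.assoc)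
  qed
  moreover have "(\<Sum>j. \<alpha> j * r ^ n j * cos (real (n j) * \<phi>) * c \<phi>) = u (complex_of_real r * cis \<phi>) * c \<phi>"
    for \<phi>
    using u_circle_eq[OF r, of \<phi>] suminf_mult2[OF sums_summable] u_sums r by metis
  ultimately show ?thesis by simp
qed

lemma u_circle_continuous:
  assumes r: "0 \<le> r" "r < 1"
  shows "continuous_on UNIV (\<lambda>\<phi>. u (complex_of_real r * cis \<phi>))"
proof -
  have "continuous_on UNIV (\<lambda>\<phi>. u (complex_of_real r * cis \<phi>) * 1)"
    by (rule uniform_limit_theorem[OF _ u_circle_uniform_limit[OF r]])
      (auto intro!: always_eventually continuous_intros)
  then show ?thesis by simp
qed

lemma u_radial_continuous:
  assumes R: "0 \<le> R" "R < 1"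
  shows "continuous_on {0..R} (\<lambda>r. u (complex_of_real r * cis \<phi>))"
proof -
  have "uniform_limit {0..R} (\<lambda>N r. \<Sum>j<N. \<alpha> j * r ^ n j * cos (real (n j) * \<phi>))
      (\<lambda>r. \<Sum>j. \<alpha> j * r ^ n j * cos (real (n j) * \<phi>)) sequentially"
  proof (rule Weierstrass_m_test[OF _ summable_abs_coeffs[OF R]])
    fix j r assume r: "r \<in> {0..R}"
    have "\<bar>\<alpha> j\<bar> * r ^ n j * \<bar>cos (real (n j) * \<phi>)\<bar> \<le> \<bar>\<alpha> j\<bar> * R ^ n j * 1"
      using r by (intro mult_mono mult_left_mono power_mono) auto
    then show "norm (\<alpha> j * r ^ n j * cos (real (n j) * \<phi>)) \<le> \<bar>\<alpha> j\<bar> * R ^ n j"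
      using r by (simp add: abs_mult)
  qed
  then have "continuous_on {0..R} (\<lambda>r. \<Sum>j. \<alpha> j * r ^ n j * cos (real (n j) * \<phi>))"
    by (rule uniform_limit_theorem[rotated]) (auto intro!: always_eventually continuous_intros)
  then show ?thesis
    by (rule continuous_on_eq) (use R u_circle_eq in auto)
qed

lemma u_radial_div_v_sq_continuous:
  assumes "0 \<le> a" "b < 1"
  shows "continuous_on {a..b} (\<lambda>r. u (complex_of_real r * cis \<phi>) / (v r)\<^sup>2)"
proof (cases "a \<le> b")
  case True
  have "continuous_on {a..b} (\<lambda>r. u (complex_of_real r * cis \<phi>))"
    by (rule continuous_on_subset[OF u_radial_continuous[of b]]) (use assms True in auto)
  moreover have "v r \<noteq> 0" if "r \<in> {a..b}" for r using that v_pos[of r] assms by auto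
  ultimately show ?thesis using v_continuous[OF assms] by (intro continuous_intros) auto
qed simp

lemma fourier_coeff:
  assumes r: "0 \<le> r" "r < 1"
  shows "integral {-pi..pi} (\<lambda>\<phi>. u (complex_of_real r * cis \<phi>) * cos (real (n k) * \<phi>))
    = pi * (\<alpha> k * r ^ n k)"
proof -
  define c where "c = (\<lambda>\<phi>. cos (real (n k) * \<phi>))"
  have ul: "uniform_limit {-pi..pi} (\<lambda>N \<phi>. \<Sum>j<N. \<alpha> j * r ^ n j * cos (real (n j) * \<phi>) * c \<phi>)
            (\<lambda>\<phi>. u (complex_of_real r * cis \<phi>) * c \<phi>) sequentially"
    by (rule uniform_limit_on_subset[OF u_circle_uniform_limit[OF r]]) (auto simp: c_def)
  obtain I J where IJ:
    "\<And>N. ((\<lambda>\<phi>. \<Sum>j<N. \<alpha> j * r ^ n j * cos (real (n j) * \<phi>) * c \<phi>) has_integral I N) {-pi..pi}"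
    "((\<lambda>\<phi>. u (complex_of_real r * cis \<phi>) * c \<phi>) has_integral J) {-pi..pi}" "I \<longlonglongrightarrow> J"
    by (rule uniform_limit_integral[OF ul]) (auto simp: c_def intro!: continuous_intros)
  have "I N = pi * (\<alpha> k * r ^ n k)" if N: "N > k" for N
  proof -
    have "I N = (\<Sum>j<N. integral {-pi..pi} (\<lambda>\<phi>. \<alpha> j * r ^ n j * (cos (real (n j) * \<phi>) * c \<phi>)))"
      using integral_unique[OF IJ(1)[of N]]
      by (subst integral_sum[symmetric])
        (auto simp: c_def mult.assoc intro!: integrable_continuous_Icc_pi continuous_intros)
    also have "\<dots> = (\<Sum>j<N. \<alpha> j * r ^ n j * (if j = k then pi else 0))"
    proof (intro sum.cong refl)
      fix j
      have "n j \<noteq> 0" "n k \<noteq> 0" "(n j = n k) = (j = k)" using n_pos n_inj by (auto simp: inj_eq)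
      then show "integral {-pi..pi} (\<lambda>\<phi>. \<alpha> j * r ^ n j * (cos (real (n j) * \<phi>) * c \<phi>)) =
          \<alpha> j * r ^ n j * (if j = k then pi else 0)"
        unfolding c_def by (simp add: integral_cos_cos del: of_nat_eq_iff)
    qed
    also have "\<dots> = pi * (\<alpha> k * r ^ n k)"
      using N by (simp add: if_distrib sum.delta cong: if_cong)
    finally show ?thesis .
  qed
  then have "I \<longlonglongrightarrow> pi * (\<alpha> k * r ^ n k)"
    by (intro tendsto_eventually) (auto simp: eventually_sequentially intro!: exI[of _ "Suc k"])
  then have "J = pi * (\<alpha> k * r ^ n k)" using IJ(3) LIMSEQ_unique by blast
  then show ?thesis using integral_unique[OF IJ(2)] by (simp add: c_def)
qed

lemma fourier_coeff_bound:
  assumes r: "0 \<le> r" "r < 1"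
  shows "\<bar>\<alpha> k\<bar> * r ^ n k \<le> 2 * K * v r"
proof -
  define U where "U = (\<lambda>\<phi>. u (complex_of_real r * cis \<phi>))"
  have "pi * (\<bar>\<alpha> k\<bar> * r ^ n k) = norm (integral {-pi..pi} (\<lambda>\<phi>. U \<phi> * cos (real (n k) * \<phi>)))"
    unfolding U_def fourier_coeff[OF r] using r by (simp add: abs_mult)
  also have "\<dots> \<le> integral {-pi..pi} (\<lambda>\<phi>. K * v r)"
  proof (rule integral_norm_bound_integral)
    show "(\<lambda>\<phi>. U \<phi> * cos (real (n k) * \<phi>)) integrable_on {-pi..pi}"
      unfolding U_def by (intro integrable_continuous_Icc_pi continuous_intros u_circle_continuous[OF r])
    fix \<phi>
    have "\<bar>U \<phi>\<bar> * \<bar>cos (real (n k) * \<phi>)\<bar> \<le> K * v r * 1"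
      unfolding U_def using u_circle_bound[OF r] K_pos v_pos[OF r] by (intro mult_mono) auto
    then show "norm (U \<phi> * cos (real (n k) * \<phi>)) \<le> K * v r" by (simp add: abs_mult)
  qed (rule integrable_const_ivl)
  also have "\<dots> = pi * (2 * K * v r)" by simp
  finally show ?thesis by simp
qed

lemma integral_u_circle_cos_sum:
  assumes r: "0 \<le> r" "r < 1"
  shows "integral {-pi..pi} (\<lambda>\<phi>. u (complex_of_real r * cis \<phi>) * (\<Sum>j<M. a j * cos (real (n j) * \<phi>)))
    = pi * (\<Sum>j<M. a j * (\<alpha> j * r ^ n j))"
proof -
  define U where "U = (\<lambda>\<phi>. u (complex_of_real r * cis \<phi>))"
  have cU: "continuous_on UNIV U" unfolding U_def by (rule u_circle_continuous[OF r])
  have "integral {-pi..pi} (\<lambda>\<phi>. U \<phi> * (\<Sum>j<M. a j * cos (real (n j) * \<phi>)))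
      = (\<Sum>j<M. integral {-pi..pi} (\<lambda>\<phi>. a j * (U \<phi> * cos (real (n j) * \<phi>))))"
    unfolding sum_distrib_left
    by (subst integral_sum[symmetric])
      (auto simp: algebra_simps intro!: integrable_continuous_Icc_pi continuous_intros cU)
  also have "\<dots> = (\<Sum>j<M. a j * (pi * (\<alpha> j * r ^ n j)))"
    unfolding U_def by (simp add: fourier_coeff[OF r])
  finally show ?thesis unfolding U_def by (simp add: sum_distrib_left algebra_simps)
qed

lemma bessel_inequality:
  assumes r: "0 \<le> r" "r < 1"
  shows "(\<Sum>j<M. (\<alpha> j * r ^ n j)\<^sup>2) \<le> 2 * (K * v r)\<^sup>2"
proof -
  define U where "U = (\<lambda>\<phi>. u (complex_of_real r * cis \<phi>))"
  define S where "S = (\<lambda>\<phi>. \<Sum>j<M. \<alpha> j * r ^ n j * cos (real (n j) * \<phi>))"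
  define \<Sigma> where "\<Sigma> = (\<Sum>j<M. (\<alpha> j * r ^ n j)\<^sup>2)"
  have cU: "continuous_on UNIV U" unfolding U_def by (rule u_circle_continuous[OF r])
  have int: "f integrable_on {-pi..pi}" if "continuous_on UNIV f" for f :: "real \<Rightarrow> real"
    using that by (rule integrable_continuous_Icc_pi)
  have US: "integral {-pi..pi} (\<lambda>\<phi>. U \<phi> * S \<phi>) = pi * \<Sigma>"
    unfolding U_def S_def \<Sigma>_def integral_u_circle_cos_sum[OF r] by (simp add: power2_eq_square)
  have SS: "integral {-pi..pi} (\<lambda>\<phi>. (S \<phi>)\<^sup>2) = pi * \<Sigma>"
    unfolding S_def \<Sigma>_def using integral_cos_sum_square[OF n_inj, of "\<lambda>j. \<alpha> j * r ^ n j" M] n_pos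
    by simp
  have UU: "integral {-pi..pi} (\<lambda>\<phi>. (U \<phi>)\<^sup>2) \<le> integral {-pi..pi} (\<lambda>\<phi>. (K * v r)\<^sup>2)"
  proof (rule integral_le)
    fix \<phi>
    have "\<bar>U \<phi>\<bar> \<le> K * v r" unfolding U_def by (rule u_circle_bound[OF r])
    then show "(U \<phi>)\<^sup>2 \<le> (K * v r)\<^sup>2" by (metis abs_le_square_iff abs_of_nonneg abs_ge_zero order_trans)
  qed (auto intro!: int continuous_intros cU)
  have "0 \<le> integral {-pi..pi} (\<lambda>\<phi>. (U \<phi> - S \<phi>)\<^sup>2)"
    by (rule integral_nonneg) (auto simp: S_def intro!: int continuous_intros cU)
  also have "\<dots> = integral {-pi..pi} (\<lambda>\<phi>. (U \<phi>)\<^sup>2) - 2 * integral {-pi..pi} (\<lambda>\<phi>. U \<phi> * S \<phi>)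
      + integral {-pi..pi} (\<lambda>\<phi>. (S \<phi>)\<^sup>2)"
    unfolding power2_diff
    by (subst integral_add integral_diff, (auto simp: S_def intro!: int continuous_intros cU)[2])+ (simp add: mult.assoc)
  finally have "pi * \<Sigma> \<le> integral {-pi..pi} (\<lambda>\<phi>. (U \<phi>)\<^sup>2)" unfolding US SS by simp
  also have "\<dots> \<le> pi * (2 * (K * v r)\<^sup>2)" using UU by simp
  finally have "pi * \<Sigma> \<le> pi * (2 * (K * v r)\<^sup>2)" .
  then show ?thesis unfolding \<Sigma>_def by simp
qed

end

text \<open>A doubling weight; q is an exponent with D \<le> 2 ^ q, so that halving the distance to the
  boundary k times multiplies the weight by at most (2 ^ k) ^ q.\<close>

locale doubling_weight = weight_function v for v +
  fixes D :: real
  assumes doubling: "doubling v D"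
begin

definition q :: nat where
  "q = (SOME q. D \<le> 2 ^ q)"

lemma D_le_power_q: "D \<le> 2 ^ q"
proof -
  have "\<exists>q::nat. D \<le> 2 ^ q" using real_arch_pow[of 2 D] by (auto intro: less_imp_le)
  then show ?thesis unfolding q_def by (rule someI_ex)
qed

lemma doubling_step: "0 < d \<Longrightarrow> d \<le> 1/2 \<Longrightarrow> v (1 - d) \<le> D * v (1 - 2 * d)"
  using doubling unfolding doubling_def by auto

lemma D_ge1: "1 \<le> D"
  using doubling_step[of "1/2"] v_ge1[of "1/2"] v_zero by simp

text \<open>Induction on the number k of doublings needed to pass from d to e.\<close>

lemma doubling_iterated_aux:
  "0 < d \<Longrightarrow> d \<le> e \<Longrightarrow> e \<le> 1/2 \<Longrightarrow> e < 2 ^ k * d \<Longrightarrow> v (1 - d) \<le> D * (e / d) ^ q * v (1 - e)"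
proof (induction k arbitrary: d)
  case (Suc k)
  have ed: "1 \<le> e / d" and v1e: "0 < v (1 - e)" using Suc.prems by (auto intro: v_pos)
  show ?case
  proof (cases "e < 2 * d")
    case True
    have "v (1 - d) \<le> D * v (1 - 2 * d)" using Suc.prems by (intro doubling_step) auto
    also have "\<dots> \<le> D * v (1 - e)" using Suc.prems True D_ge1 by (intro mult_left_mono v_le) auto
    also have "\<dots> \<le> D * (e / d) ^ q * v (1 - e)"
      using ed D_ge1 v1e by (intro mult_right_mono) (auto simp: one_le_power)
    finally show ?thesis .
  next
    case False
    have IH: "v (1 - 2 * d) \<le> D * (e / (2 * d)) ^ q * v (1 - e)"
      using Suc.IH[of "2 * d"] Suc.prems False by (auto simp: mult.assoc)
    have "v (1 - d) \<le> D * v (1 - 2 * d)" using Suc.prems False by (intro doubling_step) auto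
    also have "\<dots> \<le> D * (D * (e / (2 * d)) ^ q * v (1 - e))"
      using IH D_ge1 by (intro mult_left_mono) auto
    also have "\<dots> = (D / 2 ^ q) * (D * (e / d) ^ q * v (1 - e))"
      by (simp add: power_divide field_simps)
    also have "\<dots> \<le> 1 * (D * (e / d) ^ q * v (1 - e))"
      using D_le_power_q D_ge1 ed v1e by (intro mult_right_mono) (auto simp: divide_le_eq)
    finally show ?thesis by simp
  qed
qed simp

lemma doubling_iterated:
  assumes "0 < d" "d \<le> e" "e \<le> 1/2"
  shows "v (1 - d) \<le> D * (e / d) ^ q * v (1 - e)"
proof -
  obtain k where "e / d < 2 ^ k" using real_arch_pow[of 2 "e / d"] by auto
  then have "e < 2 ^ k * d" using assms by (simp add: divide_less_eq)
  then show ?thesis using doubling_iterated_aux assms by blast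
qed

lemma doubling_compare:
  assumes r: "1/2 \<le> r" "r < 1" and \<rho>: "0 \<le> \<rho>" "\<rho> < 1"
    and X: "1 \<le> X" "1 - r \<le> X * (1 - \<rho>)"
  shows "v \<rho> \<le> D * X ^ q * v r"
proof (cases "\<rho> \<le> r")
  case True
  have "1 \<le> D * X ^ q" using D_ge1 X by (simp add: one_le_power order_trans[OF _ mult_mono[of 1 D 1 "X ^ q"]])
  then have "v r \<le> D * X ^ q * v r" using v_pos[of r] r by (simp add: mult_le_cancel_right1)
  then show ?thesis using True \<rho> r v_le[of \<rho> r] by linarith
next
  case False
  have "v (1 - (1 - \<rho>)) \<le> D * ((1 - r) / (1 - \<rho>)) ^ q * v (1 - (1 - r))"
    using False r \<rho> by (intro doubling_iterated) auto
  also have "\<dots> \<le> D * X ^ q * v r"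
  proof -
    have "(1 - r) / (1 - \<rho>) \<le> X" using X \<rho> by (simp add: divide_le_eq)
    then have "((1 - r) / (1 - \<rho>)) ^ q \<le> X ^ q" by (rule power_mono) (use r \<rho> in simp)
    then show ?thesis using D_ge1 v_pos[of r] r by (simp add: mult_right_mono mult_left_mono)
  qed
  finally show ?thesis by simp
qed

end

locale lacunary_series = cosine_series v u \<alpha> n K + doubling_weight v D for v u \<alpha> n K D +
  fixes lam :: real
  assumes lam_gt1: "1 < lam"
    and lacunary: "\<forall>j. lam * real (n j) < real (n (Suc j)) \<and> n (Suc j) \<le> 4 * n j"
begin

lemma n_lower_growth: "lam ^ k * real (n j) \<le> real (n (j + k))"
proof (induction k)
  case (Suc k)
  have "lam ^ Suc k * real (n j) = lam * (lam ^ k * real (n j))" by simp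
  also have "\<dots> \<le> lam * real (n (j + k))" using Suc lam_gt1 by (intro mult_left_mono) auto
  also have "\<dots> \<le> real (n (j + Suc k))" using lacunary[rule_format, of "j + k"] by simp
  finally show ?case .
qed simp

lemma n_upper_growth: "real (n (j + k)) \<le> 4 ^ k * real (n j)"
proof (induction k)
  case (Suc k)
  have "real (n (j + Suc k)) \<le> 4 * real (n (j + k))" using lacunary[rule_format, of "j + k"] by simp
  also have "\<dots> \<le> 4 * (4 ^ k * real (n j))" using Suc by simp
  finally show ?case by simp
qed simp

text \<open>The frequencies grow geometrically, so their partial sums are comparable to the last term.\<close>

definition C_lac :: real where
  "C_lac = lam / (lam - 1)"

lemma sum_n_le: "(\<Sum>j\<le>N. real (n j)) \<le> real (n N) * C_lac"
proof (induction N)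
  case 0
  have "1 \<le> C_lac" using lam_gt1 by (simp add: C_lac_def)
  then show ?case using n_ge1[of 0] by simp
next
  case (Suc N)
  have "real (n N) \<le> real (n (Suc N)) / lam"
    using lacunary[rule_format, of N] lam_gt1 by (simp add: field_simps)
  moreover have "0 \<le> C_lac" using lam_gt1 by (simp add: C_lac_def)
  ultimately have "real (n N) * C_lac \<le> (real (n (Suc N)) / lam) * C_lac" by (rule mult_right_mono)
  then have "(\<Sum>j\<le>Suc N. real (n j)) \<le> (real (n (Suc N)) / lam) * C_lac + real (n (Suc N))"
    using Suc by simp
  also have "\<dots> = real (n (Suc N)) * C_lac" using lam_gt1 by (simp add: C_lac_def field_simps)
  finally show ?case .
qed

definition gn :: "nat \<Rightarrow> real" where
  "gn j = v (1 - 1 / real (n j))"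

lemma radius_range: "0 \<le> 1 - 1 / real (n j)" "1 - 1 / real (n j) < 1"
  using n_ge1[of j] by auto

lemma gn_ge1: "1 \<le> gn j"
  unfolding gn_def using radius_range by (intro v_ge1) auto

lemma gn_mono: "i \<le> j \<Longrightarrow> gn i \<le> gn j"
proof -
  assume "i \<le> j"
  then have "real (n i) \<le> real (n j)" using n_mono by simp
  then have "1 - 1 / real (n i) \<le> 1 - 1 / real (n j)" using n_ge1[of i] by (simp add: frac_le)
  then show ?thesis unfolding gn_def using radius_range by (intro v_le) auto
qed

lemma gn_le_weight:
  assumes r: "1/2 \<le> r" and X: "1 \<le> real (n j) * (1 - r)"
  shows "gn j \<le> D * (real (n j) * (1 - r)) ^ q * v r"
  unfolding gn_def
proof (rule doubling_compare)
  show "r < 1" using X by (smt (verit) mult_nonneg_nonpos of_nat_0_le_iff)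
  show "1 - r \<le> real (n j) * (1 - r) * (1 - (1 - 1 / real (n j)))" using n_ge1[of j] by simp
qed (use r X radius_range in auto)

text \<open>At the radius 1 - 1 / (2 n j) the factor r ^ n j is at least 1/2 and the weight is at most
  D g (n j); with the Fourier coefficient bound this controls the coefficients.\<close>

lemma half_radius:
  shows "0 \<le> 1 - 1 / (2 * real (n j))" "1 - 1 / (2 * real (n j)) < 1"
    "1/2 \<le> (1 - 1 / (2 * real (n j))) ^ n j" "v (1 - 1 / (2 * real (n j))) \<le> D * gn j"
proof -
  show "0 \<le> 1 - 1 / (2 * real (n j))" "1 - 1 / (2 * real (n j)) < 1" using n_ge1[of j] by auto
  show "1/2 \<le> (1 - 1 / (2 * real (n j))) ^ n j" using half_le_power[of "n j"] n_ge1[of j] by simp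
  have "v (1 - 1 / (2 * real (n j))) \<le> D * v (1 - 2 * (1 / (2 * real (n j))))"
    using n_ge1[of j] by (intro doubling_step) auto
  then show "v (1 - 1 / (2 * real (n j))) \<le> D * gn j" by (simp add: gn_def)
qed

definition C_coeff :: real where
  "C_coeff = 4 * K * D"

lemma C_coeff_pos: "0 < C_coeff"
  using K_pos D_ge1 by (simp add: C_coeff_def)

lemma coeff_le_gn: "\<bar>\<alpha> j\<bar> \<le> C_coeff * gn j"
proof -
  define r where "r = 1 - 1 / (2 * real (n j))"
  have r: "0 \<le> r" "r < 1" "1/2 \<le> r ^ n j" "v r \<le> D * gn j" using half_radius[of j] by (auto simp: r_def)
  have "\<bar>\<alpha> j\<bar> * (1/2) \<le> \<bar>\<alpha> j\<bar> * r ^ n j" using r by (intro mult_left_mono) auto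
  also have "\<dots> \<le> 2 * K * v r" by (rule fourier_coeff_bound) (use r in auto)
  also have "\<dots> \<le> 2 * K * (D * gn j)" using r K_pos by (intro mult_left_mono) auto
  finally show ?thesis by (simp add: C_coeff_def)
qed

text \<open>Bessel's inequality at the radius 1 - 1 / (2 n M).\<close>

definition C_bessel :: real where
  "C_bessel = 8 * K\<^sup>2 * D\<^sup>2"

lemma sum_coeff_sq_le: "(\<Sum>j\<le>M. (\<alpha> j)\<^sup>2) \<le> C_bessel * (gn M)\<^sup>2"
proof -
  define r where "r = 1 - 1 / (2 * real (n M))"
  have r: "0 \<le> r" "r < 1" "1/2 \<le> r ^ n M" "v r \<le> D * gn M" using half_radius[of M] by (auto simp: r_def)
  have "(\<alpha> j * (1/2))\<^sup>2 \<le> (\<alpha> j * r ^ n j)\<^sup>2" if "j \<le> M" for j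
  proof -
    have "r ^ n M \<le> r ^ n j" using r n_mono[OF that] by (intro power_decreasing) auto
    then have "\<bar>\<alpha> j\<bar> * (1/2) \<le> \<bar>\<alpha> j\<bar> * r ^ n j" using r by (intro mult_left_mono) auto
    then show ?thesis using r by (simp add: abs_mult flip: abs_le_square_iff)
  qed
  then have "(\<Sum>j\<le>M. (\<alpha> j * (1/2))\<^sup>2) \<le> (\<Sum>j<Suc M. (\<alpha> j * r ^ n j)\<^sup>2)"
    unfolding lessThan_Suc_atMost by (intro sum_mono) auto
  then have "(\<Sum>j\<le>M. (\<alpha> j)\<^sup>2) \<le> 4 * (\<Sum>j<Suc M. (\<alpha> j * r ^ n j)\<^sup>2)"
    using sum_distrib_left[of 4 "\<lambda>j. (\<alpha> j * (1/2))\<^sup>2" "{..M}"] by (simp add: power2_eq_square)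
  also have "\<dots> \<le> 4 * (2 * (K * v r)\<^sup>2)" using bessel_inequality[OF r(1,2), of "Suc M"] by simp
  also have "\<dots> \<le> 4 * (2 * (K * (D * gn M))\<^sup>2)"
    using r K_pos v_pos[OF r(1,2)] by (intro mult_left_mono power_mono) auto
  finally show ?thesis by (simp add: C_bessel_def power_mult_distrib)
qed

text \<open>Super-exponential decay of exp (- lam ^ i) beats the polynomial factors 4 ^ (i q) coming from
  the doubling condition: fix m with 2 4 ^ q \<le> lam ^ m.\<close>

definition m_lac :: nat where
  "m_lac = (SOME m. 2 * 4 ^ q \<le> lam ^ m)"

lemma m_lac_spec: "2 * 4 ^ q \<le> lam ^ m_lac"
proof -
  have "\<exists>m. 2 * 4 ^ q \<le> lam ^ m" using real_arch_pow[OF lam_gt1, of "2 * 4 ^ q"] by (auto intro: less_imp_le)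
  then show ?thesis unfolding m_lac_def by (rule someI_ex)
qed

lemma power4_exp_lam_power_le: "4 ^ (i * q) * exp (- (lam ^ i)) \<le> fact m_lac * (1/2) ^ i"
proof -
  have li: "1 \<le> lam ^ i" using lam_gt1 by (simp add: one_le_power)
  have "(lam ^ i) ^ m_lac * exp (- (lam ^ i)) \<le> fact m_lac" by (rule power_mult_exp_le_fact) (use li in simp)
  then have "exp (- (lam ^ i)) \<le> fact m_lac / (lam ^ m_lac) ^ i"
    using lam_gt1 by (simp add: field_simps power_mult[symmetric] mult.commute)
  then have "4 ^ (i * q) * exp (- (lam ^ i)) \<le> 4 ^ (i * q) * (fact m_lac / (lam ^ m_lac) ^ i)"
    by (rule mult_left_mono) simp
  also have "\<dots> = fact m_lac * (4 ^ q / lam ^ m_lac) ^ i"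
    by (simp add: power_divide power_mult mult.commute[of i q])
  also have "\<dots> \<le> fact m_lac * (1/2) ^ i"
    using m_lac_spec lam_gt1 by (intro mult_left_mono power_mono) (auto simp: divide_le_eq)
  finally show ?thesis .
qed

definition C_decay :: real where
  "C_decay = fact (2 * q) * exp 1 * fact m_lac"

lemma lacunary_decay:
  assumes x: "1 \<le> x"
  shows "4 ^ (i * q) * x ^ (2 * q) * exp (- (lam ^ i * x)) \<le> C_decay * (1/2) ^ i"
proof -
  have "0 \<le> (lam ^ i - 1) * (x - 1)" using x lam_gt1 by (simp add: one_le_power)
  then have "x + (lam ^ i - 1) \<le> lam ^ i * x" by (simp add: algebra_simps)
  then have "exp (- (lam ^ i * x)) \<le> exp (- x) * (exp 1 * exp (- (lam ^ i)))"
    by (simp flip: exp_add)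
  then have "4 ^ (i * q) * x ^ (2 * q) * exp (- (lam ^ i * x))
      \<le> (x ^ (2 * q) * exp (- x)) * exp 1 * (4 ^ (i * q) * exp (- (lam ^ i)))"
    using x by (simp add: mult_left_mono algebra_simps)
  also have "\<dots> \<le> fact (2 * q) * exp 1 * (fact m_lac * (1/2) ^ i)"
  proof (rule mult_mono)
    show "x ^ (2 * q) * exp (- x) * exp 1 \<le> fact (2 * q) * exp 1"
      using power_mult_exp_le_fact[of x "2 * q"] x by simp
  qed (auto intro: power4_exp_lam_power_le)
  finally show ?thesis by (simp add: C_decay_def algebra_simps)
qed

definition C_tail :: real where
  "C_tail = C_coeff * D\<^sup>2 * C_decay"

lemma C_tail_nonneg: "0 \<le> C_tail"
  using C_coeff_pos by (simp add: C_tail_def C_decay_def)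

lemma tail_term_bound:
  assumes r: "1/2 \<le> r" "r \<le> R" and R: "R < 1 - 1 / real (n (Suc N))"
  shows "\<bar>\<alpha> (Suc N + i)\<bar> * r ^ n (Suc N + i) \<le> C_tail * (1/2) ^ i * (v r)\<^sup>2 / v R"
proof -
  define j where "j = Suc N + i"
  define x where "x = real (n (Suc N)) * (1 - r)"
  define E where "E = exp (- (lam ^ i * x))"
  have mR: "1 \<le> real (n (Suc N)) * (1 - R)" using R n_ge1[of "Suc N"] by (simp add: field_simps)
  have R1: "R < 1" using mR by (smt (verit) mult_nonneg_nonpos of_nat_0_le_iff)
  have x1: "1 \<le> x" using mR r n_ge1[of "Suc N"] unfolding x_def by (smt (verit) mult_left_mono)
  have vr: "0 < v r" and vR: "0 < v R" using r R1 by (auto intro!: v_pos)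
  have lower: "lam ^ i * x \<le> real (n j) * (1 - r)" and upper: "real (n j) * (1 - r) \<le> 4 ^ i * x"
    using n_lower_growth[of i "Suc N"] n_upper_growth[of "Suc N" i] r R1
    unfolding x_def j_def by (auto simp: mult.assoc[symmetric] intro: mult_right_mono)
  have "1 * 1 \<le> lam ^ i * x" using x1 lam_gt1 by (intro mult_mono) (auto simp: one_le_power)
  then have "gn j \<le> D * (real (n j) * (1 - r)) ^ q * v r"
    using lower r by (intro gn_le_weight) auto
  also have "\<dots> \<le> D * (4 ^ (i * q) * x ^ q) * v r"
    using upper r R1 vr D_ge1 power_mono[OF upper, of q]
    by (intro mult_right_mono mult_left_mono) (auto simp: power_mult_distrib power_mult)
  finally have gj: "gn j \<le> D * (4 ^ (i * q) * x ^ q) * v r" .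
  have "r ^ n j \<le> exp (- (real (n j) * (1 - r)))" by (rule power_le_exp) (use r R1 in auto)
  also have "\<dots> \<le> E" unfolding E_def using lower by simp
  finally have rj: "r ^ n j \<le> E" .
  have vRr: "v R \<le> D * x ^ q * v r"
    by (rule doubling_compare) (use r R1 x1 mR in \<open>auto simp: x_def mult.assoc intro: mult_left_mono\<close>)
  have "\<bar>\<alpha> j\<bar> * r ^ n j \<le> C_coeff * (D * (4 ^ (i * q) * x ^ q) * v r) * E"
    using coeff_le_gn[of j] gj rj r C_coeff_pos gn_ge1[of j]
    by (intro mult_mono order_trans[OF coeff_le_gn]) (auto simp: E_def)
  also have "\<dots> = C_coeff * D\<^sup>2 * (4 ^ (i * q) * x ^ (2 * q) * E) * (v r)\<^sup>2 / (D * x ^ q * v r)"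
  proof -
    have "x ^ (2 * q) = x ^ q * x ^ q" "x ^ (q * 2) = x ^ q * x ^ q" by (simp_all add: mult_2 mult_2_right power_add)
    then show ?thesis using D_ge1 x1 vr by (simp add: field_simps power2_eq_square)
  qed
  also have "\<dots> \<le> C_coeff * D\<^sup>2 * (4 ^ (i * q) * x ^ (2 * q) * E) * (v r)\<^sup>2 / v R"
    by (rule divide_left_mono[OF vRr]) (use C_coeff_pos vR vr D_ge1 x1 in \<open>auto simp: E_def\<close>)
  also have "\<dots> \<le> C_coeff * D\<^sup>2 * (C_decay * (1/2) ^ i) * (v r)\<^sup>2 / v R"
    using lacunary_decay[OF x1, of i] C_coeff_pos vR unfolding E_def
    by (intro divide_right_mono mult_right_mono mult_left_mono) auto
  finally show ?thesis by (simp add: C_tail_def j_def algebra_simps)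
qed

lemma tail_bound:
  assumes r: "1/2 \<le> r" "r \<le> R" and R: "R < 1 - 1 / real (n (Suc N))"
  shows "\<bar>u (complex_of_real r * cis \<phi>) - (\<Sum>j\<le>N. \<alpha> j * r ^ n j * cos (real (n j) * \<phi>))\<bar>
     \<le> 2 * C_tail * (v r)\<^sup>2 / v R"
proof -
  define f where "f = (\<lambda>j. \<alpha> j * r ^ n j * cos (real (n j) * \<phi>))"
  define g where "g = (\<lambda>i::nat. (C_tail * (v r)\<^sup>2 / v R) * (1/2) ^ i)"
  have "R < 1" using R n_ge1[of "Suc N"] by (smt (verit) divide_nonneg_nonneg of_nat_0_le_iff)
  then have r1: "0 \<le> r" "r < 1" using r by auto
  have "(\<lambda>i. f (i + Suc N)) sums (u (complex_of_real r * cis \<phi>) - (\<Sum>i<Suc N. f i))"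
    using u_sums r1 unfolding f_def by (intro sums_split_initial_segment) blast
  then have eq: "u (complex_of_real r * cis \<phi>) - (\<Sum>j\<le>N. f j) = (\<Sum>i. f (i + Suc N))"
    by (simp add: sums_iff lessThan_Suc_atMost)
  have gs: "g sums ((C_tail * (v r)\<^sup>2 / v R) * 2)"
    unfolding g_def using geometric_sums[of "1/2::real"] by (intro sums_mult) simp
  have "norm (\<Sum>i. f (i + Suc N)) \<le> suminf g"
  proof (rule norm_suminf_le)
    fix i
    have "norm (f (i + Suc N)) \<le> \<bar>\<alpha> (Suc N + i)\<bar> * r ^ n (Suc N + i)"
      using r1 mult_left_mono[of "\<bar>cos (real (n (Suc N + i)) * \<phi>)\<bar>" 1 "\<bar>\<alpha> (Suc N + i)\<bar> * r ^ n (Suc N + i)"]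
      by (simp add: f_def abs_mult add.commute)
    also have "\<dots> \<le> g i" using tail_term_bound[OF r R, of i] by (simp add: g_def algebra_simps)
    finally show "norm (f (i + Suc N)) \<le> g i" .
  qed (use gs in \<open>rule sums_summable\<close>)
  also have "\<dots> = 2 * C_tail * (v r)\<^sup>2 / v R" using gs by (simp add: sums_iff)
  finally show ?thesis using eq by (simp add: f_def)
qed

definition partial_sum :: "nat \<Rightarrow> real \<Rightarrow> real \<Rightarrow> real" where
  "partial_sum N \<phi> r = (\<Sum>j\<le>N. \<alpha> j * r ^ n j * cos (real (n j) * \<phi>))"

text \<open>Beyond the radius r N the partial sum changes by O(g (n N)), since r ^ n j is Lipschitz with
  constant n j and the n j sum up to O(n N).\<close>

lemma partial_sum_increment:
  assumes r: "1 - 1 / real (n N) \<le> r" "r < 1"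
  shows "\<bar>partial_sum N \<phi> r - partial_sum N \<phi> (1 - 1 / real (n N))\<bar> \<le> C_coeff * C_lac * gn N"
proof -
  define \<rho> where "\<rho> = 1 - 1 / real (n N)"
  have \<rho>: "0 \<le> \<rho>" "\<rho> \<le> r" "r - \<rho> \<le> 1 / real (n N)" using r radius_range[of N] by (auto simp: \<rho>_def)
  have summand: "\<bar>\<alpha> j * cos (real (n j) * \<phi>) * (r ^ n j - \<rho> ^ n j)\<bar>
      \<le> (C_coeff * gn N / real (n N)) * real (n j)" if j: "j \<le> N" for j
  proof -
    have a: "\<bar>\<alpha> j\<bar> \<le> C_coeff * gn N"
      using coeff_le_gn[of j] gn_mono[OF j] C_coeff_pos by (smt (verit) mult_left_mono)
    have "0 \<le> r ^ n j - \<rho> ^ n j" using \<rho> by (simp add: power_mono)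
    moreover have "r ^ n j - \<rho> ^ n j \<le> real (n j) * (1 / real (n N))"
      using power_diff_le[of \<rho> r "n j"] \<rho> r mult_left_mono[OF \<rho>(3), of "real (n j)"] by simp
    ultimately have p: "\<bar>r ^ n j - \<rho> ^ n j\<bar> \<le> real (n j) * (1 / real (n N))" by simp
    have "\<bar>\<alpha> j * cos (real (n j) * \<phi>) * (r ^ n j - \<rho> ^ n j)\<bar>
        \<le> (C_coeff * gn N) * 1 * (real (n j) * (1 / real (n N)))"
      unfolding abs_mult using C_coeff_pos gn_ge1[of N] by (intro mult_mono a p) auto
    then show ?thesis by simp
  qed
  have "\<bar>partial_sum N \<phi> r - partial_sum N \<phi> \<rho>\<bar>
      = \<bar>\<Sum>j\<le>N. \<alpha> j * cos (real (n j) * \<phi>) * (r ^ n j - \<rho> ^ n j)\<bar>"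
    unfolding partial_sum_def by (simp add: sum_subtractf[symmetric] algebra_simps)
  also have "\<dots> \<le> (\<Sum>j\<le>N. (C_coeff * gn N / real (n N)) * real (n j))"
    using summand by (intro order_trans[OF sum_abs] sum_mono) auto
  also have "\<dots> \<le> (C_coeff * gn N / real (n N)) * (real (n N) * C_lac)"
    unfolding sum_distrib_left[symmetric]
    by (rule mult_left_mono[OF sum_n_le]) (use C_coeff_pos gn_ge1[of N] in auto)
  also have "\<dots> = C_coeff * C_lac * gn N" using n_ge1[of N] by simp
  finally show ?thesis unfolding \<rho>_def .
qed

text \<open>Beyond the radius r N the partial sum is O(g (n N)): at r N itself it differs from u by the
  tail, which is O(v (r N)) by the tail bound, and |u| \<le> K v (r N) = K g (n N).\<close>

definition C_partial :: real where
  "C_partial = K + 2 * C_tail + C_coeff * C_lac"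

lemma C_partial_nonneg: "0 \<le> C_partial"
  using K_pos C_tail_nonneg C_coeff_pos lam_gt1 by (simp add: C_partial_def C_lac_def)

lemma partial_sum_bound:
  assumes N: "2 \<le> n N" and r: "1 - 1 / real (n N) \<le> r" "r < 1"
  shows "\<bar>partial_sum N \<phi> r\<bar> \<le> C_partial * gn N"
proof -
  define \<rho> where "\<rho> = 1 - 1 / real (n N)"
  have \<rho>: "1/2 \<le> \<rho>" "0 \<le> \<rho>" "\<rho> < 1" using N radius_range[of N] by (auto simp: \<rho>_def field_simps)
  have "1 / real (n (Suc N)) < 1 / real (n N)"
    using n_less_Suc n_pos by (intro divide_strict_left_mono) auto
  then have \<rho>R: "\<rho> < 1 - 1 / real (n (Suc N))" by (simp add: \<rho>_def)
  have v\<rho>: "v \<rho> = gn N" and v\<rho>_pos: "0 < v \<rho>" using \<rho> by (auto simp: gn_def \<rho>_def intro: v_pos)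
  have "\<bar>u (complex_of_real \<rho> * cis \<phi>) - partial_sum N \<phi> \<rho>\<bar> \<le> 2 * C_tail * (v \<rho>)\<^sup>2 / v \<rho>"
    unfolding partial_sum_def by (rule tail_bound) (use \<rho> \<rho>R in auto)
  also have "\<dots> = 2 * C_tail * gn N" using v\<rho>_pos v\<rho> by (simp add: power2_eq_square)
  finally have tail: "\<bar>u (complex_of_real \<rho> * cis \<phi>) - partial_sum N \<phi> \<rho>\<bar> \<le> 2 * C_tail * gn N" .
  have u\<rho>: "\<bar>u (complex_of_real \<rho> * cis \<phi>)\<bar> \<le> K * gn N"
    using u_circle_bound[of \<rho> \<phi>] \<rho> v\<rho> by simp
  have "\<bar>partial_sum N \<phi> r - partial_sum N \<phi> \<rho>\<bar> \<le> C_coeff * C_lac * gn N"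
    unfolding \<rho>_def using r by (rule partial_sum_increment)
  then show ?thesis using tail u\<rho> by (simp add: C_partial_def algebra_simps)
qed

text \<open>Up to the radius r j, the decay of r ^ n j compensates the growth of g (n j) ^ 2 / v r ^ 2.\<close>

definition C_peak :: real where
  "C_peak = D\<^sup>2 * fact (2 * q)"

lemma power_gn_sq_le:
  assumes r: "1/2 \<le> r" "r \<le> 1 - 1 / real (n j)"
  shows "r ^ n j * (gn j)\<^sup>2 \<le> C_peak * (v r)\<^sup>2"
proof -
  define X where "X = real (n j) * (1 - r)"
  have X1: "1 \<le> X" using r n_ge1[of j] by (simp add: X_def field_simps)
  have r1: "r < 1" using r radius_range[of j] by linarith
  have g: "gn j \<le> D * X ^ q * v r" unfolding X_def by (rule gn_le_weight) (use r X1 in \<open>auto simp: X_def\<close>)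
  have e: "r ^ n j \<le> exp (- X)" unfolding X_def by (rule power_le_exp) (use r r1 in auto)
  have "r ^ n j * (gn j)\<^sup>2 \<le> exp (- X) * (D * X ^ q * v r)\<^sup>2"
    using e g gn_ge1[of j] by (intro mult_mono power_mono) auto
  also have "\<dots> = D\<^sup>2 * (X ^ (2 * q) * exp (- X)) * (v r)\<^sup>2"
    by (simp add: power_mult_distrib power_mult[symmetric] mult.commute[of 2 q] algebra_simps)
  also have "\<dots> \<le> D\<^sup>2 * fact (2 * q) * (v r)\<^sup>2"
    using power_mult_exp_le_fact[of X "2 * q"] X1 by (intro mult_right_mono mult_left_mono) auto
  finally show ?thesis by (simp add: C_peak_def)
qed

definition c_integrand :: "nat \<Rightarrow> real \<Rightarrow> real" where
  "c_integrand j r = r ^ n j / (v r)\<^sup>2"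

definition c_partial :: "nat \<Rightarrow> real \<Rightarrow> real" where
  "c_partial j R = RS_integral (c_integrand j) v (1/2) R"

definition c_coeff :: "nat \<Rightarrow> real" where
  "c_coeff j = RS_integral_to_1 (c_integrand j) v (1/2)"

lemma c_integrand_continuous:
  assumes "1/2 \<le> a" "a \<le> b" "b < 1"
  shows "continuous_on {v a..v b} (\<lambda>s. c_integrand j (v_inv s))"
  unfolding c_integrand_def using assms
  by (intro continuous_on_compose_v_inv continuous_on_power_div_v_sq) auto

lemma c_integrand_integrable:
  assumes "1/2 \<le> a" "a \<le> b" "b < 1"
  shows "(\<lambda>s. c_integrand j (v_inv s)) integrable_on {v a..v b}"
  by (rule integrable_continuous_real[OF c_integrand_continuous[OF assms]])

lemma c_integrand_bounds:
  assumes "1/2 \<le> a" "a \<le> b" "b < 1" "s \<in> {v a..v b}"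
  shows "0 \<le> c_integrand j (v_inv s)" "c_integrand j (v_inv s) \<le> 1 / s\<^sup>2"
proof -
  have ws: "v_inv s \<in> {a..b}" "v (v_inv s) = s" using v_inv_in_interval[of a b s] assms by auto
  then have r: "0 \<le> v_inv s" "v_inv s \<le> 1" using assms by auto
  then show "0 \<le> c_integrand j (v_inv s)" by (simp add: c_integrand_def)
  have "v_inv s ^ n j \<le> 1" using r by (simp add: power_le_one)
  then show "c_integrand j (v_inv s) \<le> 1 / s\<^sup>2" using ws by (simp add: c_integrand_def divide_right_mono)
qed

lemma c_integrand_le_peak:
  assumes "1/2 \<le> a" "a \<le> b" "b < 1" "s \<in> {v a..v b}" "s \<le> gn j"
  shows "c_integrand j (v_inv s) \<le> C_peak / (gn j)\<^sup>2"
proof -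
  have ws: "v_inv s \<in> {a..b}" "v (v_inv s) = s" using v_inv_in_interval[of a b s] assms by auto
  have "\<not> 1 - 1 / real (n j) < v_inv s"
    using v_less[of "1 - 1 / real (n j)" "v_inv s"] ws assms radius_range[of j] by (auto simp: gn_def)
  then have "v_inv s ^ n j * (gn j)\<^sup>2 \<le> C_peak * (v (v_inv s))\<^sup>2"
    using ws assms by (intro power_gn_sq_le) auto
  moreover have "0 < s" using ws assms v_pos[of "v_inv s"] by auto
  moreover have "0 < gn j" using gn_ge1[of j] by simp
  ultimately show ?thesis using ws by (simp add: c_integrand_def field_simps)
qed

lemma c_partial_eq:
  assumes "1/2 \<le> R" "R < 1"
  shows "c_partial j R = integral {v (1/2)..v R} (\<lambda>s. c_integrand j (v_inv s))"
  unfolding c_partial_def c_integrand_def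
  by (rule RS_integral_change_var) (use assms continuous_on_power_div_v_sq in auto)

lemma c_partial_split:
  assumes "1/2 \<le> R" "R \<le> R'" "R' < 1"
  shows "c_partial j R' = c_partial j R + integral {v R..v R'} (\<lambda>s. c_integrand j (v_inv s))"
proof -
  have le: "v (1/2) \<le> v R" "v R \<le> v R'" using assms by (auto intro!: v_le)
  show ?thesis
    using Henstock_Kurzweil_Integration.integral_combine[OF le c_integrand_integrable[of "1/2" R' j]]
      assms c_partial_eq[of R j] c_partial_eq[of R' j] by simp
qed

lemma c_partial_mono:
  assumes "1/2 \<le> R" "R \<le> R'" "R' < 1"
  shows "c_partial j R \<le> c_partial j R'"
proof -
  have "0 \<le> integral {v R..v R'} (\<lambda>s. c_integrand j (v_inv s))"
    by (rule integral_nonneg[OF c_integrand_integrable]) (use assms c_integrand_bounds(1)[of R R'] in auto)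
  then show ?thesis using c_partial_split[OF assms] by simp
qed

lemma c_partial_nonneg:
  assumes "1/2 \<le> R" "R < 1"
  shows "0 \<le> c_partial j R"
  using c_partial_mono[of "1/2" R j] assms c_partial_eq[of "1/2" j] by simp

text \<open>The key estimate c j \<le> C / g (n j): split the substituted integral at s = g (n j), use the
  peak bound below and the 1/s^2 bound above.\<close>

definition C_c :: real where
  "C_c = C_peak + 1"

lemma c_partial_bound:
  assumes R: "1/2 \<le> R" "R < 1"
  shows "c_partial j R \<le> C_c / gn j"
proof -
  define a where "a = v (1/2)"
  define b where "b = v R"
  define h where "h = (\<lambda>s. c_integrand j (v_inv s))"
  have a: "1 \<le> a" unfolding a_def by (rule v_ge1) auto
  have ab: "a \<le> b" unfolding a_def b_def using R by (intro v_le) auto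
  have g: "1 \<le> gn j" by (rule gn_ge1)
  have C_peak: "0 \<le> C_peak" by (simp add: C_peak_def)
  have c: "c_partial j R = integral {a..b} h" unfolding a_def b_def h_def by (rule c_partial_eq[OF R])
  have hi: "h integrable_on {a'..b'}" if "a \<le> a'" "a' \<le> b'" "b' \<le> b" for a' b'
    unfolding h_def by (rule integrable_subinterval_real[OF c_integrand_integrable[of "1/2" R j]])
      (use R that in \<open>auto simp: a_def b_def h_def\<close>)
  have above: "integral {a'..b} h \<le> 1 / a'" if "a \<le> a'" "a' \<le> b" for a'
    using that a c_integrand_bounds(2)[of "1/2" R _ j] R
    by (intro integral_le_inverse hi) (auto simp: a_def b_def h_def)
  have below: "integral {a..b'} h \<le> C_peak / (gn j)\<^sup>2 * (b' - a)" if "a \<le> b'" "b' \<le> b" "b' \<le> gn j" for b'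
    using that c_integrand_le_peak[of "1/2" R _ j] R
    by (intro integral_le_const hi) (auto simp: a_def b_def h_def)
  have peak: "C_peak / (gn j)\<^sup>2 * (b' - a) \<le> C_peak / gn j" if "b' \<le> gn j" for b'
  proof -
    have "C_peak / (gn j)\<^sup>2 * (b' - a) \<le> C_peak / (gn j)\<^sup>2 * gn j"
      using that a g C_peak by (intro mult_left_mono) auto
    then show ?thesis using g by (simp add: power2_eq_square)
  qed
  consider "gn j \<le> a" | "b \<le> gn j" | "a < gn j" "gn j < b" by linarith
  then have "integral {a..b} h \<le> C_peak / gn j + 1 / gn j"
  proof cases
    case 1
    then have "integral {a..b} h \<le> 1 / gn j" using above[of a] ab a g by (smt (verit) frac_le)
    then show ?thesis using C_peak g by (smt (verit) divide_nonneg_nonneg)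
  next
    case 2
    then show ?thesis using below[of b] peak[of b] ab g by (smt (verit) divide_nonneg_nonneg)
  next
    case 3
    then have "integral {a..b} h = integral {a..gn j} h + integral {gn j..b} h"
      using Henstock_Kurzweil_Integration.integral_combine[of a "gn j" b h] hi[of a b] ab by simp
    then show ?thesis using below[of "gn j"] peak[of "gn j"] above[of "gn j"] 3 by simp
  qed
  then show ?thesis unfolding c by (simp add: C_c_def add_divide_distrib)
qed

lemma c_partial_tendsto: "(c_partial j \<longlongrightarrow> c_coeff j) (at_left 1)"
proof -
  have lim: "(c_partial j \<longlongrightarrow> Sup (c_partial j ` {1/2..<1})) (at_left 1)"
    by (rule increasing_bounded_tendsto_at_left_1[where B="C_c / gn j"])
      (auto intro: c_partial_mono c_partial_bound)
  have "c_coeff j = Lim (at_left 1) (c_partial j)"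
    unfolding c_coeff_def RS_integral_to_1_def c_partial_def by (simp add: fun_eq_iff)
  also have "\<dots> = Sup (c_partial j ` {1/2..<1})" using lim by (intro tendsto_Lim) auto
  finally show ?thesis using lim by simp
qed

lemma c_coeff_bounds: "0 \<le> c_coeff j" "c_coeff j \<le> C_c / gn j"
proof -
  have ev: "eventually (\<lambda>R. 1/2 \<le> R \<and> R < 1) (at_left (1::real))"
    using eventually_at_left_real[of "1/2" "1::real"] by (rule eventually_mono) auto
  show "0 \<le> c_coeff j"
    by (rule tendsto_lowerbound[OF c_partial_tendsto]) (use ev c_partial_nonneg in \<open>auto elim: eventually_mono\<close>)
  show "c_coeff j \<le> C_c / gn j"
    by (rule tendsto_upperbound[OF c_partial_tendsto]) (use ev c_partial_bound in \<open>auto elim: eventually_mono\<close>)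
qed

lemma partial_sum_div_v_sq:
  "partial_sum N \<phi> r / (v r)\<^sup>2 = (\<Sum>j\<le>N. \<alpha> j * cos (real (n j) * \<phi>) * c_integrand j r)"
  unfolding partial_sum_def c_integrand_def by (simp add: sum_divide_distrib algebra_simps)

lemma partial_sum_integral:
  assumes "1/2 \<le> a" "a \<le> b" "b < 1"
  shows "(\<lambda>s. partial_sum N \<phi> (v_inv s) / (v (v_inv s))\<^sup>2) integrable_on {v a..v b}"
    and "integral {v a..v b} (\<lambda>s. partial_sum N \<phi> (v_inv s) / (v (v_inv s))\<^sup>2)
      = (\<Sum>j\<le>N. \<alpha> j * cos (real (n j) * \<phi>) * integral {v a..v b} (\<lambda>s. c_integrand j (v_inv s)))"
proof -
  have int: "(\<lambda>s. \<alpha> j * cos (real (n j) * \<phi>) * c_integrand j (v_inv s)) integrable_on {v a..v b}" for j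
    using c_integrand_integrable[OF assms] by (rule integrable_on_mult_right)
  show "(\<lambda>s. partial_sum N \<phi> (v_inv s) / (v (v_inv s))\<^sup>2) integrable_on {v a..v b}"
    unfolding partial_sum_div_v_sq by (intro integrable_sum int) simp
  show "integral {v a..v b} (\<lambda>s. partial_sum N \<phi> (v_inv s) / (v (v_inv s))\<^sup>2)
      = (\<Sum>j\<le>N. \<alpha> j * cos (real (n j) * \<phi>) * integral {v a..v b} (\<lambda>s. c_integrand j (v_inv s)))"
    unfolding partial_sum_div_v_sq by (subst integral_sum) (simp_all add: int)
qed

text \<open>First half of the decomposition: up to R < r (N+1) the tail u - P N contributes O(1),
  because it is O(v r ^ 2 / v R) and the v-length of [1/2, R] is at most v R.\<close>

lemma tail_integral_bound:
  assumes R: "1/2 \<le> R" "R < 1 - 1 / real (n (Suc N))"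
  shows "\<bar>integral {v (1/2)..v R} (\<lambda>s. (u (complex_of_real (v_inv s) * cis \<phi>)
      - partial_sum N \<phi> (v_inv s)) / (v (v_inv s))\<^sup>2)\<bar> \<le> 2 * C_tail"
proof -
  have R1: "R < 1" using R n_ge1[of "Suc N"] by (smt (verit) divide_nonneg_nonneg of_nat_0_le_iff)
  have a1: "1 \<le> v (1/2)" and avR: "v (1/2) \<le> v R" and vR: "0 < v R"
    using R R1 by (auto intro!: v_ge1 v_le v_pos)
  have "norm (integral {v (1/2)..v R} (\<lambda>s. (u (complex_of_real (v_inv s) * cis \<phi>)
      - partial_sum N \<phi> (v_inv s)) / (v (v_inv s))\<^sup>2)) \<le> integral {v (1/2)..v R} (\<lambda>s. 2 * C_tail / v R)"
  proof (rule integral_norm_bound_integral)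
    have "(\<lambda>s. u (complex_of_real (v_inv s) * cis \<phi>) / (v (v_inv s))\<^sup>2) integrable_on {v (1/2)..v R}"
      using R R1 by (intro integrable_continuous_real continuous_on_compose_v_inv
          u_radial_div_v_sq_continuous) auto
    then show "(\<lambda>s. (u (complex_of_real (v_inv s) * cis \<phi>) - partial_sum N \<phi> (v_inv s))
        / (v (v_inv s))\<^sup>2) integrable_on {v (1/2)..v R}"
      unfolding diff_divide_distrib using partial_sum_integral(1)[of "1/2" R] R R1
      by (intro integrable_diff) auto
    fix s assume s: "s \<in> {v (1/2)..v R}"
    have ws: "v_inv s \<in> {1/2..R}" "v (v_inv s) = s" using v_inv_in_interval[of "1/2" R s] s R R1 by auto
    have spos: "0 < s" using s a1 by auto
    have "\<bar>u (complex_of_real (v_inv s) * cis \<phi>) - partial_sum N \<phi> (v_inv s)\<bar>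
        \<le> 2 * C_tail * (v (v_inv s))\<^sup>2 / v R"
      unfolding partial_sum_def by (rule tail_bound) (use ws R in auto)
    then show "norm ((u (complex_of_real (v_inv s) * cis \<phi>) - partial_sum N \<phi> (v_inv s))
        / (v (v_inv s))\<^sup>2) \<le> 2 * C_tail / v R"
      using spos ws by (simp add: divide_le_eq field_simps)
  qed (rule integrable_const_ivl)
  also have "\<dots> = 2 * C_tail * ((v R - v (1/2)) / v R)" using avR by simp
  also have "\<dots> \<le> 2 * C_tail * 1"
    using C_tail_nonneg vR a1 by (intro mult_left_mono) (auto simp: divide_le_eq)
  finally show ?thesis by simp
qed

text \<open>Second half: beyond R \<ge> r N the partial sum is O(g (n N)) \<le> O(v R), and
  int_R^1 d v / v ^ 2 \<le> 1 / v R, so the missing part of the integrals c j contributes O(1).\<close>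

lemma partial_sum_integral_beyond:
  assumes N: "2 \<le> n N" and R: "1 - 1 / real (n N) \<le> R" "R \<le> R'" "R' < 1"
  shows "\<bar>\<Sum>j\<le>N. \<alpha> j * cos (real (n j) * \<phi>) * (c_partial j R' - c_partial j R)\<bar> \<le> C_partial"
proof -
  have "1 / real (n N) \<le> 1/2" using N by (simp add: divide_le_eq)
  then have R0: "1/2 \<le> R" using R(1) by linarith
  have vR: "0 < v R" and vle: "v R \<le> v R'" and gR: "gn N \<le> v R"
    using R0 R radius_range[of N] by (auto simp: gn_def intro!: v_pos v_le)
  have "(\<Sum>j\<le>N. \<alpha> j * cos (real (n j) * \<phi>) * (c_partial j R' - c_partial j R))
      = integral {v R..v R'} (\<lambda>s. partial_sum N \<phi> (v_inv s) / (v (v_inv s))\<^sup>2)"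
    using partial_sum_integral(2)[of R R' N \<phi>] c_partial_split[of R R'] R0 R by simp
  also have "norm \<dots> \<le> integral {v R..v R'} (\<lambda>s. C_partial * gn N * (1 / s\<^sup>2))"
  proof (rule integral_norm_bound_integral)
    show "(\<lambda>s. partial_sum N \<phi> (v_inv s) / (v (v_inv s))\<^sup>2) integrable_on {v R..v R'}"
      using partial_sum_integral(1) R0 R by simp
    show "(\<lambda>s. C_partial * gn N * (1 / s\<^sup>2)) integrable_on {v R..v R'}"
      using has_integral_inverse_square[of "v R" "v R'"] vR vle by (intro integrable_on_mult_right) auto
    fix s assume s: "s \<in> {v R..v R'}"
    have ws: "v_inv s \<in> {R..R'}" "v (v_inv s) = s" using v_inv_in_interval[of R R' s] s R0 R by auto
    have "\<bar>partial_sum N \<phi> (v_inv s)\<bar> \<le> C_partial * gn N"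
      by (rule partial_sum_bound[OF N]) (use ws R in auto)
    then show "norm (partial_sum N \<phi> (v_inv s) / (v (v_inv s))\<^sup>2) \<le> C_partial * gn N * (1 / s\<^sup>2)"
      using ws s vR by (simp add: divide_right_mono)
  qed
  also have "\<dots> = C_partial * gn N * (1 / v R - 1 / v R')"
    using integral_unique[OF has_integral_inverse_square[of "v R" "v R'"]] vR vle
      integral_mult_right[of "{v R..v R'}" "C_partial * gn N" "\<lambda>s. 1 / s\<^sup>2"] by (simp only:)
  also have "\<dots> \<le> C_partial * gn N * (1 / v R)"
    using C_partial_nonneg gn_ge1[of N] vR vle by (intro mult_left_mono) auto
  also have "\<dots> \<le> C_partial * 1"
  proof -
    have "gn N * (1 / v R) \<le> 1" using gR vR by (simp add: divide_le_eq)
    then show ?thesis using C_partial_nonneg by (metis mult.assoc mult_left_mono)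
  qed
  finally show ?thesis by simp
qed

lemma remainder_bound:
  assumes N: "2 \<le> n N" and R: "1 - 1 / real (n N) \<le> R" "R < 1"
  shows "\<bar>\<Sum>j\<le>N. \<alpha> j * cos (real (n j) * \<phi>) * (c_coeff j - c_partial j R)\<bar> \<le> C_partial"
proof (rule tendsto_upperbound)
  show "((\<lambda>R'. \<bar>\<Sum>j\<le>N. \<alpha> j * cos (real (n j) * \<phi>) * (c_partial j R' - c_partial j R)\<bar>)
      \<longlongrightarrow> \<bar>\<Sum>j\<le>N. \<alpha> j * cos (real (n j) * \<phi>) * (c_coeff j - c_partial j R)\<bar>) (at_left 1)"
    by (intro tendsto_intros c_partial_tendsto)
  show "eventually (\<lambda>R'. \<bar>\<Sum>j\<le>N. \<alpha> j * cos (real (n j) * \<phi>) * (c_partial j R' - c_partial j R)\<bar>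
      \<le> C_partial) (at_left 1)"
    using eventually_at_left_real[OF R(2)]
    by (rule eventually_mono) (use partial_sum_integral_beyond[OF N R(1)] in auto)
qed simp

lemma first_estimate:
  assumes N: "2 \<le> n N" and R: "1 - 1 / real (n N) \<le> R" "R < 1 - 1 / real (n (Suc N))"
  shows "\<bar>RS_integral (\<lambda>r. u (complex_of_real r * cis \<phi>) / (v r)\<^sup>2) v (1/2) R
           - (\<Sum>j\<le>N. \<alpha> j * c_coeff j * cos (real (n j) * \<phi>))\<bar> \<le> 2 * C_tail + C_partial"
proof -
  have "1 / real (n N) \<le> 1/2" using N by (simp add: divide_le_eq)
  then have R0: "1/2 \<le> R" using R(1) by linarith
  have R1: "R < 1" using R n_ge1[of "Suc N"] by (smt (verit) divide_nonneg_nonneg of_nat_0_le_iff)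
  define U where "U = (\<lambda>s. u (complex_of_real (v_inv s) * cis \<phi>) / (v (v_inv s))\<^sup>2)"
  define P where "P = (\<lambda>s. partial_sum N \<phi> (v_inv s) / (v (v_inv s))\<^sup>2)"
  have U_int: "U integrable_on {v (1/2)..v R}"
    unfolding U_def using R0 R1 by (intro integrable_continuous_real continuous_on_compose_v_inv
        u_radial_div_v_sq_continuous) auto
  have "RS_integral (\<lambda>r. u (complex_of_real r * cis \<phi>) / (v r)\<^sup>2) v (1/2) R = integral {v (1/2)..v R} U"
    unfolding U_def by (rule RS_integral_change_var) (use R0 R1 u_radial_div_v_sq_continuous in auto)
  moreover have "integral {v (1/2)..v R} P = (\<Sum>j\<le>N. \<alpha> j * cos (real (n j) * \<phi>) * c_partial j R)"
    unfolding P_def using partial_sum_integral(2)[of "1/2" R] c_partial_eq[of R] R0 R1 by simp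
  moreover have "integral {v (1/2)..v R} (\<lambda>s. U s - P s) = integral {v (1/2)..v R} U - integral {v (1/2)..v R} P"
    using U_int partial_sum_integral(1)[of "1/2" R] R0 R1 by (intro integral_diff) (auto simp: P_def)
  ultimately have "RS_integral (\<lambda>r. u (complex_of_real r * cis \<phi>) / (v r)\<^sup>2) v (1/2) R
           - (\<Sum>j\<le>N. \<alpha> j * c_coeff j * cos (real (n j) * \<phi>))
      = integral {v (1/2)..v R} (\<lambda>s. U s - P s)
        - (\<Sum>j\<le>N. \<alpha> j * cos (real (n j) * \<phi>) * (c_coeff j - c_partial j R))"
    by (simp add: sum_subtractf right_diff_distrib algebra_simps)
  moreover have "\<bar>integral {v (1/2)..v R} (\<lambda>s. U s - P s)\<bar> \<le> 2 * C_tail"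
    unfolding U_def P_def diff_divide_distrib[symmetric] using R0 R(2) by (rule tail_integral_bound)
  ultimately show ?thesis using remainder_bound[OF N R(1) R1, of \<phi>] by linarith
qed

text \<open>The second claim: c j \<le> C_c / g (n j) and Abel summation against Bessel's inequality.\<close>

lemma second_estimate:
  "(\<Sum>j\<le>N. (\<alpha> j * c_coeff j)\<^sup>2) \<le> C_c\<^sup>2 * C_bessel * (1 + 2 * ln (gn N))"
proof -
  have Cb: "0 \<le> C_bessel" by (simp add: C_bessel_def)
  have "(\<alpha> j * c_coeff j)\<^sup>2 \<le> C_c\<^sup>2 * ((\<alpha> j)\<^sup>2 / (gn j)\<^sup>2)" for j
  proof -
    have "(c_coeff j)\<^sup>2 \<le> (C_c / gn j)\<^sup>2" using c_coeff_bounds[of j] by (intro power_mono) auto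
    then have "(\<alpha> j)\<^sup>2 * (c_coeff j)\<^sup>2 \<le> (\<alpha> j)\<^sup>2 * (C_c / gn j)\<^sup>2" by (intro mult_left_mono) auto
    then show ?thesis by (simp add: power_mult_distrib power_divide mult.commute)
  qed
  then have "(\<Sum>j\<le>N. (\<alpha> j * c_coeff j)\<^sup>2) \<le> C_c\<^sup>2 * (\<Sum>j\<le>N. (\<alpha> j)\<^sup>2 / (gn j)\<^sup>2)"
    by (simp add: sum_distrib_left sum_mono)
  also have "\<dots> \<le> C_c\<^sup>2 * ((\<Sum>j\<le>N. (\<alpha> j)\<^sup>2) / (gn N)\<^sup>2 + 2 * C_bessel * (ln (gn N) - ln (gn 0)))"
    by (intro mult_left_mono abel_summation_log_bound) (use gn_ge1 gn_mono sum_coeff_sq_le in auto)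
  also have "\<dots> \<le> C_c\<^sup>2 * (C_bessel + 2 * C_bessel * ln (gn N))"
  proof (rule mult_left_mono)
    have "(\<Sum>j\<le>N. (\<alpha> j)\<^sup>2) / (gn N)\<^sup>2 \<le> C_bessel"
      using sum_coeff_sq_le[of N] gn_ge1[of N] by (simp add: divide_le_eq)
    moreover have "0 \<le> 2 * C_bessel * ln (gn 0)" using gn_ge1[of 0] Cb by simp
    ultimately show "(\<Sum>j\<le>N. (\<alpha> j)\<^sup>2) / (gn N)\<^sup>2 + 2 * C_bessel * (ln (gn N) - ln (gn 0))
        \<le> C_bessel + 2 * C_bessel * ln (gn N)" by (simp add: algebra_simps)
  qed simp
  finally show ?thesis by (simp add: algebra_simps)
qed

lemma ln_gn_eventually_ge1: "\<exists>M. \<forall>N. M \<le> n N \<longrightarrow> 1 \<le> ln (gn N)"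
proof -
  have "eventually (\<lambda>r. exp 1 \<le> v r) (at_left 1)"
    using v_tendsto_infinity by (simp add: filterlim_at_top)
  then obtain b where b: "b < 1" "\<And>y. b < y \<Longrightarrow> y < 1 \<Longrightarrow> exp 1 \<le> v y"
    by (auto simp: eventually_at_left_field)
  show ?thesis
  proof (intro exI allI impI)
    fix N assume N: "nat \<lceil>1 / (1 - b)\<rceil> + 1 \<le> n N"
    then have "1 / (1 - b) < real (n N)" by linarith
    then have "1 / real (n N) < 1 - b" using b n_ge1[of N] by (simp add: field_simps)
    then have "exp 1 \<le> gn N" unfolding gn_def using n_ge1[of N] by (intro b) auto
    then show "1 \<le> ln (gn N)" using ln_mono[of "exp 1" "gn N"] by simp
  qed
qed

end

theorem mainTheorem11:
  fixes v :: "real \<Rightarrow> real" and D K lam :: real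
    and u :: "complex \<Rightarrow> real" and \<alpha> :: "nat \<Rightarrow> real" and n :: "nat \<Rightarrow> nat"
  assumes "weight v" and "doubling v D"
    and "K > 0" and "\<forall>z. norm z < 1 \<longrightarrow> \<bar>u z\<bar> \<le> K * v (norm z)"
    and "\<forall>r \<phi>. 0 \<le> r \<and> r < 1 \<longrightarrow>
           (\<lambda>j. \<alpha> j * r ^ n j * cos (real (n j) * \<phi>)) sums u (complex_of_real r * cis \<phi>)"
    and "\<forall>j. n j > 0"
    and "1 < lam" and "lam \<le> 2"
    and "\<forall>j. lam * real (n j) < real (n (Suc j)) \<and> n (Suc j) \<le> 4 * n j"
  shows "\<exists>C. (\<forall>N R \<phi>. n N \<ge> 2 \<and> 1 - 1 / real (n N) \<le> R \<and> R < 1 - 1 / real (n (Suc N))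
               \<and> -pi < \<phi> \<and> \<phi> \<le> pi \<longrightarrow>
             \<bar>RS_integral (\<lambda>r. u (complex_of_real r * cis \<phi>) / (v r)\<^sup>2) v (1/2) R
              - (\<Sum>j\<le>N. \<alpha> j * RS_integral_to_1 (\<lambda>r. r ^ n j / (v r)\<^sup>2) v (1/2)
                          * cos (real (n j) * \<phi>))\<bar> \<le> C)
         \<and> (\<exists>M. \<forall>N. n N \<ge> M \<longrightarrow>
             (\<Sum>j\<le>N. (\<alpha> j * RS_integral_to_1 (\<lambda>r. r ^ n j / (v r)\<^sup>2) v (1/2))\<^sup>2)
               \<le> C * ln (v (1 - 1 / real (n N))))"
proof -
  have "n j < n (Suc j)" for j
  proof -
    have "1 * real (n j) \<le> lam * real (n j)" using assms(7) by (intro mult_right_mono) auto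
    then show ?thesis using assms(9) by (metis of_nat_less_iff mult_1 order_le_less_trans)
  qed
  then interpret lacunary_series v u \<alpha> n K D lam
    using assms by unfold_locales auto
  have c: "RS_integral_to_1 (\<lambda>r. r ^ n j / (v r)\<^sup>2) v (1/2) = c_coeff j" for j
    by (simp add: c_coeff_def c_integrand_def[abs_def])
  obtain M where M: "\<And>N. M \<le> n N \<Longrightarrow> 1 \<le> ln (gn N)" using ln_gn_eventually_ge1 by blast
  define C where "C = max (2 * C_tail + C_partial) (3 * C_c\<^sup>2 * C_bessel)"
  show ?thesis unfolding c gn_def[symmetric]
  proof (intro exI[of _ C] conjI allI impI exI[of _ M])
    fix N R \<phi> assume "2 \<le> n N \<and> 1 - 1 / real (n N) \<le> R \<and> R < 1 - 1 / real (n (Suc N))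
      \<and> - pi < \<phi> \<and> \<phi> \<le> pi"
    then show "\<bar>RS_integral (\<lambda>r. u (complex_of_real r * cis \<phi>) / (v r)\<^sup>2) v (1/2) R
        - (\<Sum>j\<le>N. \<alpha> j * c_coeff j * cos (real (n j) * \<phi>))\<bar> \<le> C"
      using first_estimate[of N R \<phi>] by (simp add: C_def)
  next
    fix N assume N: "M \<le> n N"
    have "C_c\<^sup>2 * C_bessel * (1 + 2 * ln (gn N)) \<le> C_c\<^sup>2 * C_bessel * (3 * ln (gn N))"
      using M[OF N] by (intro mult_left_mono) (auto simp: C_bessel_def)
    also have "\<dots> \<le> C * ln (gn N)" using M[OF N] by (simp add: C_def mult_right_mono)
    finally show "(\<Sum>j\<le>N. (\<alpha> j * c_coeff j)\<^sup>2) \<le> C * ln (gn N)"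
      using second_estimate[of N] by linarith
  qed
qed

end
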